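(* The allegories $\mathsf{StoneE}^\mathsf{R}$ and $\mathsf{SubS5^S}$ are equivalent. The equivalence sends an $\mathsf{S5}$-subordination space $(X,E)$ to $(\mathsf{Clop}(X),S_E)$ and a compatible closed relation $R$ to $S_R$, and its quasi-inverse sends an $\mathsf{S5}$-subordination algebra $(B,S)$ to $(\mathsf{Ult}(B),R_S)$ and a compatible subordination $T$ to $R_T$.
   Context: For a closed relation $R$ between Stone spaces, $S_R$ is the relation between clopen algebras given by $U\mathrel{S_R}V\iff R[U]\subseteq V$; for a relation $S$ between boolean algebras, $R_S$ is the relation between ultrafilter spaces given by $x\mathrel{R_S}y\iff S[x]\subseteq y$. A subordination $S\colon A\to B$ between boolean algebras is a relation satisfying: (S1) $0\mathrel{S}0$, $1\mathrel{S}1$; (S2) $a,b\mathrel{S}c\Rightarrow(a\vee b)\mathrel{S}c$; (S3) $a\mathrel{S}c,d\Rightarrow a\mathrel{S}(c\wedge d)$; (S4) $a\le b\mathrel{S}c\le d\Rightarrow a\mathrel{S}d$. An $\mathsf{S5}$-subordination on $B$ is a subordination $S\colon B\to B$ satisfying (S5) $a\mathrel{S}b\Rightarrow a\le b$; (S6) $a\mathrel{S}b\Rightarrow\neg b\mathrel{S}\neg a$; (S7) $a\mathrel{S}b\Rightarrow\exists c\,(a\mathrel{S}c$ and $c\mathrel{S}b)$. $\mathsf{StoneE}^\mathsf{R}$: objects are pairs $(X,E)$ with $X$ a Stone space and $E$ a closed equivalence relation on $X$ ($\mathsf{S5}$-subordination spaces); morphisms $(X,E)\to(X',E')$ are closed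 relations $R\subseteq X\times X'$ with $R\circ E=R=E'\circ R$ (compatible closed relations); identity on $(X,E)$ is $E$; composition is relational composition; hom-sets ordered by inclusion; dagger is converse relation. $\mathsf{SubS5^S}$: objects are pairs $(B,S)$ with $B$ a boolean algebra and $S$ an $\mathsf{S5}$-subordination ($\mathsf{S5}$-subordination algebras); morphisms $(B,S)\to(B',S')$ are subordinations $T\colon B\to B'$ with $T\circ S=T=S'\circ T$ (compatible subordinations); identity on $(B,S)$ is $S$; composition relational; hom-sets ordered by reverse inclusion; dagger $T^\dagger$ given by $b\mathrel{T^\dagger}a$ iff $\neg a\mathrel{T}\neg b$. An allegory is an order-enriched dagger category with binary meets in hom-sets, monotone dagger, and modular law $gf\wedge h\le(g\wedge hf^\dagger)f$; an equivalence of allegories is a functor that is an equivalence of categories, preserves binary meets of morphisms and commutes with daggers. *)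

theory Defs
  imports "HOL-Analysis.Analysis"
begin

definition clopens :: "'a topology \<Rightarrow> 'a set set" where
  "clopens X = {U. openin X U \<and> closedin X U}"

definition zero_dim :: "'a topology \<Rightarrow> bool" where
  "zero_dim X \<longleftrightarrow> (\<forall>W x. openin X W \<and> x \<in> W \<longrightarrow> (\<exists>C \<in> clopens X. x \<in> C \<and> C \<subseteq> W))"

definition Stone_space :: "'a topology \<Rightarrow> bool" where
  "Stone_space X \<longleftrightarrow> compact_space X \<and> Hausdorff_space X \<and> zero_dim X"

record 'b balg =
  bcarrier :: "'b set"
  bzero :: 'b
  bone :: 'b
  bjoin :: "'b \<Rightarrow> 'b \<Rightarrow> 'b"
  bmeet :: "'b \<Rightarrow> 'b \<Rightarrow> 'b"
  bneg :: "'b \<Rightarrow> 'b"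

definition is_balg :: "'b balg \<Rightarrow> bool" where
  "is_balg B \<longleftrightarrow>
     bzero B \<in> bcarrier B \<and> bone B \<in> bcarrier B \<and>
     (\<forall>a\<in>bcarrier B. \<forall>b\<in>bcarrier B. bjoin B a b \<in> bcarrier B \<and> bmeet B a b \<in> bcarrier B) \<and>
     (\<forall>a\<in>bcarrier B. bneg B a \<in> bcarrier B) \<and>
     (\<forall>a\<in>bcarrier B. \<forall>b\<in>bcarrier B.
        bjoin B a b = bjoin B b a \<and> bmeet B a b = bmeet B b a \<and>
        bjoin B a (bmeet B a b) = a \<and> bmeet B a (bjoin B a b) = a) \<and>
     (\<forall>a\<in>bcarrier B. \<forall>b\<in>bcarrier B. \<forall>c\<in>bcarrier B.
        bjoin B (bjoin B a b) c = bjoin B a (bjoin B b c) \<and>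
        bmeet B (bmeet B a b) c = bmeet B a (bmeet B b c) \<and>
        bmeet B a (bjoin B b c) = bjoin B (bmeet B a b) (bmeet B a c) \<and>
        bjoin B a (bmeet B b c) = bmeet B (bjoin B a b) (bjoin B a c)) \<and>
     (\<forall>a\<in>bcarrier B. bjoin B a (bzero B) = a \<and> bmeet B a (bone B) = a \<and>
        bjoin B a (bneg B a) = bone B \<and> bmeet B a (bneg B a) = bzero B)"

definition ble :: "'b balg \<Rightarrow> 'b \<Rightarrow> 'b \<Rightarrow> bool" where
  "ble B a b \<longleftrightarrow> bmeet B a b = a"

definition Clop :: "'a topology \<Rightarrow> 'a set balg" where
  "Clop X = \<lparr> bcarrier = clopens X, bzero = {}, bone = topspace X,
             bjoin = (\<union>), bmeet = (\<inter>), bneg = (\<lambda>U. topspace X - U) \<rparr>"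

definition ultrafilter :: "'b balg \<Rightarrow> 'b set \<Rightarrow> bool" where
  "ultrafilter B u \<longleftrightarrow> u \<subseteq> bcarrier B \<and> bone B \<in> u \<and> bzero B \<notin> u \<and>
     (\<forall>a\<in>u. \<forall>b\<in>u. bmeet B a b \<in> u) \<and>
     (\<forall>a\<in>u. \<forall>b\<in>bcarrier B. ble B a b \<longrightarrow> b \<in> u) \<and>
     (\<forall>a\<in>bcarrier B. a \<in> u \<or> bneg B a \<in> u)"

definition ults :: "'b balg \<Rightarrow> 'b set set" where
  "ults B = {u. ultrafilter B u}"

definition stone_map :: "'b balg \<Rightarrow> 'b \<Rightarrow> 'b set set" where
  "stone_map B a = {u \<in> ults B. a \<in> u}"

definition Ult :: "'b balg \<Rightarrow> 'b set topology" where
  "Ult B = topology_generated_by (stone_map B ` bcarrier B)"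

definition subordination :: "'b balg \<Rightarrow> 'd balg \<Rightarrow> ('b \<times> 'd) set \<Rightarrow> bool" where
  "subordination A B S \<longleftrightarrow>
     S \<subseteq> bcarrier A \<times> bcarrier B \<and>
     (bzero A, bzero B) \<in> S \<and> (bone A, bone B) \<in> S \<and>
     (\<forall>a b c. (a, c) \<in> S \<and> (b, c) \<in> S \<longrightarrow> (bjoin A a b, c) \<in> S) \<and>
     (\<forall>a c d. (a, c) \<in> S \<and> (a, d) \<in> S \<longrightarrow> (a, bmeet B c d) \<in> S) \<and>
     (\<forall>a b c d. a \<in> bcarrier A \<and> d \<in> bcarrier B \<and> ble A a b \<and> (b, c) \<in> S \<and> ble B c d
        \<longrightarrow> (a, d) \<in> S)"

definition S5_subordination :: "'b balg \<Rightarrow> ('b \<times> 'b) set \<Rightarrow> bool" where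
  "S5_subordination B S \<longleftrightarrow> subordination B B S \<and>
     (\<forall>a b. (a, b) \<in> S \<longrightarrow> ble B a b) \<and>
     (\<forall>a b. (a, b) \<in> S \<longrightarrow> (bneg B b, bneg B a) \<in> S) \<and>
     (\<forall>a b. (a, b) \<in> S \<longrightarrow> (\<exists>c. (a, c) \<in> S \<and> (c, b) \<in> S))"

definition S5_space :: "'a topology \<Rightarrow> ('a \<times> 'a) set \<Rightarrow> bool" where
  "S5_space X E \<longleftrightarrow> Stone_space X \<and> E \<subseteq> topspace X \<times> topspace X \<and>
     equiv (topspace X) E \<and> closedin (prod_topology X X) E"

text \<open>Morphisms of StoneE^R (composition R' after R is R O R').\<close>
definition stone_mor :: "'a topology \<Rightarrow> ('a \<times> 'a) set \<Rightarrow> 'c topology \<Rightarrow> ('c \<times> 'c) set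
    \<Rightarrow> ('a \<times> 'c) set \<Rightarrow> bool" where
  "stone_mor X E X' E' R \<longleftrightarrow> R \<subseteq> topspace X \<times> topspace X' \<and>
     closedin (prod_topology X X') R \<and> E O R = R \<and> R O E' = R"

definition stone_iso :: "'a topology \<Rightarrow> ('a \<times> 'a) set \<Rightarrow> 'c topology \<Rightarrow> ('c \<times> 'c) set
    \<Rightarrow> ('a \<times> 'c) set \<Rightarrow> bool" where
  "stone_iso X E X' E' R \<longleftrightarrow> stone_mor X E X' E' R \<and>
     (\<exists>Q. stone_mor X' E' X E Q \<and> R O Q = E \<and> Q O R = E')"

definition S5_subalg :: "'b balg \<Rightarrow> ('b \<times> 'b) set \<Rightarrow> bool" where
  "S5_subalg B S \<longleftrightarrow> is_balg B \<and> S5_subordination B S"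

definition sub_mor :: "'b balg \<Rightarrow> ('b \<times> 'b) set \<Rightarrow> 'd balg \<Rightarrow> ('d \<times> 'd) set
    \<Rightarrow> ('b \<times> 'd) set \<Rightarrow> bool" where
  "sub_mor B S B' S' T \<longleftrightarrow> subordination B B' T \<and> S O T = T \<and> T O S' = T"

definition sub_iso :: "'b balg \<Rightarrow> ('b \<times> 'b) set \<Rightarrow> 'd balg \<Rightarrow> ('d \<times> 'd) set
    \<Rightarrow> ('b \<times> 'd) set \<Rightarrow> bool" where
  "sub_iso B S B' S' T \<longleftrightarrow> sub_mor B S B' S' T \<and>
     (\<exists>Q. sub_mor B' S' B S Q \<and> T O Q = S \<and> Q O T = S')"

definition sub_dagger :: "'b balg \<Rightarrow> 'd balg \<Rightarrow> ('b \<times> 'd) set \<Rightarrow> ('d \<times> 'b) set" where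
  "sub_dagger B B' T = {(b, a). a \<in> bcarrier B \<and> b \<in> bcarrier B' \<and> (bneg B a, bneg B' b) \<in> T}"

text \<open>Binary meet in the hom-set of SubS5^S, ordered by REVERSE inclusion.\<close>
definition sub_is_meet :: "'b balg \<Rightarrow> ('b \<times> 'b) set \<Rightarrow> 'd balg \<Rightarrow> ('d \<times> 'd) set
    \<Rightarrow> ('b \<times> 'd) set \<Rightarrow> ('b \<times> 'd) set \<Rightarrow> ('b \<times> 'd) set \<Rightarrow> bool" where
  "sub_is_meet B S B' S' T1 T2 M \<longleftrightarrow> sub_mor B S B' S' M \<and> T1 \<subseteq> M \<and> T2 \<subseteq> M \<and>
     (\<forall>T. sub_mor B S B' S' T \<and> T1 \<subseteq> T \<and> T2 \<subseteq> T \<longrightarrow> M \<subseteq> T)"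

definition S_of :: "'a topology \<Rightarrow> 'c topology \<Rightarrow> ('a \<times> 'c) set \<Rightarrow> ('a set \<times> 'c set) set" where
  "S_of X X' R = {(U, V). U \<in> clopens X \<and> V \<in> clopens X' \<and> R `` U \<subseteq> V}"

definition R_of :: "'b balg \<Rightarrow> 'd balg \<Rightarrow> ('b \<times> 'd) set \<Rightarrow> ('b set \<times> 'd set) set" where
  "R_of B B' S = {(x, y). x \<in> ults B \<and> y \<in> ults B' \<and> S `` x \<subseteq> y}"

definition eta_iso :: "'a topology \<Rightarrow> ('a \<times> 'a) set \<Rightarrow> ('a \<times> 'a set set) set" where
  "eta_iso X E = {(x, u). x \<in> topspace X \<and> u \<in> ults (Clop X) \<and>
      S_of X X E `` {U \<in> clopens X. x \<in> U} \<subseteq> u}"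

definition eps_iso :: "'b balg \<Rightarrow> ('b \<times> 'b) set \<Rightarrow> ('b \<times> 'b set set) set" where
  "eps_iso B S = {(a, U). a \<in> bcarrier B \<and> U \<in> clopens (Ult B) \<and>
      (\<exists>b. (a, b) \<in> S \<and> stone_map B b \<subseteq> U)}"

end

theory Submission
  imports Defs
begin

text \<open>Both functors extend the two halves of Stone duality from maps to relations. For a Stone
  space \<open>X\<close>, \<open>x \<mapsto> {U clopen. x \<in> U}\<close> is a homeomorphism onto the ultrafilter space of
  \<open>Clop X\<close>; for a Boolean algebra \<open>B\<close>, \<open>a \<mapsto> {u. a \<in> u}\<close> is an isomorphism onto the clopens
  of \<open>Ult B\<close> (prime filter theorem). The round trips recover relations: \<open>S_R\<close>-images of
  clopen neighbourhoods of \<open>x\<close> lie in those of \<open>y\<close> iff \<open>x R y\<close>, because closed relations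
  between compact spaces have closed images and clopens separate closed from open sets; and
  \<open>R_T[a] \<subseteq> b\<close> on basic clopens iff \<open>a T b\<close>, by separating with ultrafilters. So \<open>R_{S_R}\<close>
  and \<open>S_{R_T}\<close> are the images of \<open>R\<close> and \<open>T\<close> under these bijections, the unit and counit are
  the images of \<open>E\<close> and \<open>S\<close>, and every required identity reduces to composing images of
  relations under injective maps, using \<open>E O E = E\<close> and \<open>S O S = S\<close>.\<close>

section \<open>Stone spaces and clopen neighbourhoods\<close>

lemma clopens_subset_topspace: "U \<in> clopens X \<Longrightarrow> U \<subseteq> topspace X"
  by (simp add: clopens_def closedin_subset)

lemma clopens_empty: "{} \<in> clopens X"
  by (simp add: clopens_def)

lemma clopens_topspace: "topspace X \<in> clopens X"
  by (simp add: clopens_def)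

lemma clopens_Un: "U \<in> clopens X \<Longrightarrow> V \<in> clopens X \<Longrightarrow> U \<union> V \<in> clopens X"
  by (simp add: clopens_def openin_Un closedin_Un)

lemma clopens_Int: "U \<in> clopens X \<Longrightarrow> V \<in> clopens X \<Longrightarrow> U \<inter> V \<in> clopens X"
  by (simp add: clopens_def openin_Int closedin_Int)

lemma clopens_Diff: "U \<in> clopens X \<Longrightarrow> topspace X - U \<in> clopens X"
  by (simp add: clopens_def openin_diff closedin_diff)

lemma clopens_Union: "finite \<F> \<Longrightarrow> \<F> \<subseteq> clopens X \<Longrightarrow> \<Union>\<F> \<in> clopens X"
  by (induction rule: finite_induct) (auto intro: clopens_empty clopens_Un)

lemma closedin_converse:
  "closedin (prod_topology Y X) (R\<inverse>) \<longleftrightarrow> closedin (prod_topology X Y) R"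
proof -
  have "R\<inverse> = (\<lambda>(x, y). (y, x)) ` R"
    by force
  moreover have "R\<inverse> \<subseteq> topspace (prod_topology Y X) \<longleftrightarrow> R \<subseteq> topspace (prod_topology X Y)"
    by auto
  ultimately show ?thesis
    using homeomorphic_map_closedness_eq[OF homeomorphic_map_swap, of X Y R] closedin_subset
    by metis
qed

lemma closedin_Image:
  assumes "compact_space X" "compact_space Y" "Hausdorff_space Y"
    and R: "closedin (prod_topology X Y) R" and K: "closedin X K"
  shows "closedin Y (R `` K)"
proof -
  have "R `` K = snd ` (R \<inter> (K \<times> topspace Y))"
    using closedin_subset[OF R] by force
  moreover have "closedin (prod_topology X Y) (R \<inter> (K \<times> topspace Y))"
    using R K by (intro closedin_Int) (auto simp: closedin_prod_Times_iff)
  then have "compactin (prod_topology X Y) (R \<inter> (K \<times> topspace Y))"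
    using assms by (simp add: closedin_compact_space compact_space_prod_topology)
  then have "compactin Y (snd ` (R \<inter> (K \<times> topspace Y)))"
    by (rule image_compactin) (rule continuous_map_snd)
  ultimately show ?thesis
    using compactin_imp_closedin[OF assms(3)] by simp
qed

lemma openin_upper_inverse_image:
  assumes "compact_space X" "compact_space Y" "Hausdorff_space X"
    and R: "closedin (prod_topology X Y) R" and V: "openin Y V"
  shows "openin X {x \<in> topspace X. R `` {x} \<subseteq> V}"
proof -
  have "closedin X (R\<inverse> `` (topspace Y - V))"
    using assms by (intro closedin_Image) (auto simp: closedin_converse)
  moreover have "{x \<in> topspace X. R `` {x} \<subseteq> V} = topspace X - R\<inverse> `` (topspace Y - V)"
    using closedin_subset[OF R] by auto
  ultimately show ?thesis
    by (simp add: closedin_def)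
qed

lemma exists_clopen_between:
  assumes "compact_space X" "zero_dim X" "closedin X K" "openin X W" "K \<subseteq> W"
  shows "\<exists>C\<in>clopens X. K \<subseteq> C \<and> C \<subseteq> W"
proof -
  let ?\<U> = "{C \<in> clopens X. C \<subseteq> W}"
  have "K \<subseteq> \<Union>?\<U>"
    using assms(2,4,5) unfolding zero_dim_def by blast
  moreover have "compactin X K"
    using assms closedin_compact_space by blast
  ultimately obtain \<F> where "finite \<F>" "\<F> \<subseteq> ?\<U>" "K \<subseteq> \<Union>\<F>"
    using compactinD[of X K ?\<U>] by (auto simp: clopens_def)
  then show ?thesis
    by (intro bexI[of _ "\<Union>\<F>"] clopens_Union) auto
qed

lemma exists_clopen_Image_subset:
  assumes "compact_space X" "Hausdorff_space X" "zero_dim X" "compact_space Y"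
    and "closedin (prod_topology X Y) R" "closedin X K" "openin Y V" "R `` K \<subseteq> V"
  shows "\<exists>W\<in>clopens X. K \<subseteq> W \<and> R `` W \<subseteq> V"
proof -
  let ?O = "{x \<in> topspace X. R `` {x} \<subseteq> V}"
  have "openin X ?O"
    using assms by (intro openin_upper_inverse_image) auto
  moreover have "K \<subseteq> ?O"
    using assms(8) closedin_subset[OF assms(6)] by auto
  ultimately show ?thesis
    using exists_clopen_between[OF assms(1,3,6), of ?O] by blast
qed

lemma S_of_relcomp:
  assumes "compact_space X" "Stone_space Y" "compact_space Z"
    and R: "closedin (prod_topology X Y) R" and R': "closedin (prod_topology Y Z) R'"
  shows "S_of X Z (R O R') = S_of X Y R O S_of Y Z R'"
proof
  show "S_of X Y R O S_of Y Z R' \<subseteq> S_of X Z (R O R')"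
    unfolding S_of_def by blast
next
  show "S_of X Z (R O R') \<subseteq> S_of X Y R O S_of Y Z R'"
  proof clarify
    fix U V assume "(U, V) \<in> S_of X Z (R O R')"
    then have U: "U \<in> clopens X" and V: "V \<in> clopens Z" and "R' `` (R `` U) \<subseteq> V"
      unfolding S_of_def by auto
    moreover have "closedin Y (R `` U)"
      using assms U by (intro closedin_Image) (auto simp: Stone_space_def clopens_def)
    ultimately obtain W where "W \<in> clopens Y" "R `` U \<subseteq> W" "R' `` W \<subseteq> V"
      using exists_clopen_Image_subset[of Y Z R' "R `` U" V] assms
      by (auto simp: Stone_space_def clopens_def)
    then show "(U, V) \<in> S_of X Y R O S_of Y Z R'"
      using U V unfolding S_of_def by blast
  qed
qed

definition clopen_nbhds :: "'a topology \<Rightarrow> 'a \<Rightarrow> 'a set set" where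
  "clopen_nbhds X x = {U \<in> clopens X. x \<in> U}"

lemma S_of_Image_clopen_nbhds_subset_iff:
  assumes X: "Stone_space X" and Y: "Stone_space Y" and R: "closedin (prod_topology X Y) R"
    and x: "x \<in> topspace X" and y: "y \<in> topspace Y"
  shows "S_of X Y R `` clopen_nbhds X x \<subseteq> clopen_nbhds Y y \<longleftrightarrow> (x, y) \<in> R"
proof
  assume "(x, y) \<in> R"
  then show "S_of X Y R `` clopen_nbhds X x \<subseteq> clopen_nbhds Y y"
    by (auto simp: S_of_def clopen_nbhds_def)
next
  assume sub: "S_of X Y R `` clopen_nbhds X x \<subseteq> clopen_nbhds Y y"
  have cX: "compact_space X" "Hausdorff_space X" "zero_dim X"
    and cY: "compact_space Y" "Hausdorff_space Y" "zero_dim Y"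
    using X Y by (auto simp: Stone_space_def)
  show "(x, y) \<in> R"
  proof (rule ccontr)
    assume "(x, y) \<notin> R"
    then have "R `` {x} \<subseteq> topspace Y - {y}"
      using closedin_subset[OF R] by auto
    moreover have x1: "closedin X {x}" and "closedin Y {y}"
      using x y cX(2) cY(2) by (auto intro: closedin_t1_singleton Hausdorff_imp_t1_space)
    then have "openin Y (topspace Y - {y})"
      by (simp add: closedin_def)
    moreover have "closedin Y (R `` {x})"
      using closedin_Image[OF cX(1) cY(1,2) R x1] .
    ultimately obtain V where V: "V \<in> clopens Y" "R `` {x} \<subseteq> V" "y \<notin> V"
      using exists_clopen_between[OF cY(1,3), of "R `` {x}" "topspace Y - {y}"] by blast
    then obtain W where "W \<in> clopens X" "x \<in> W" "R `` W \<subseteq> V"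
      using exists_clopen_Image_subset[OF cX cY(1) R x1, of V] by (auto simp: clopens_def)
    then have "V \<in> clopen_nbhds Y y"
      using sub V(1) by (auto simp: S_of_def clopen_nbhds_def)
    then show False
      using V(3) by (simp add: clopen_nbhds_def)
  qed
qed

lemma Clop_simps [simp]:
  "bcarrier (Clop X) = clopens X" "bzero (Clop X) = {}" "bone (Clop X) = topspace X"
  "bjoin (Clop X) = (\<union>)" "bmeet (Clop X) = (\<inter>)" "bneg (Clop X) = (\<lambda>U. topspace X - U)"
  by (simp_all add: Clop_def)

lemma ble_Clop [simp]: "ble (Clop X) U V \<longleftrightarrow> U \<subseteq> V"
  by (auto simp: ble_def)

lemma is_balg_Clop: "is_balg (Clop X)"
  unfolding is_balg_def Clop_simps
  by (intro conjI ballI; (blast intro: clopens_empty clopens_topspace clopens_Un clopens_Int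
        clopens_Diff dest: clopens_subset_topspace)?)

lemma ultrafilter_clopen_nbhds:
  assumes "x \<in> topspace X"
  shows "ultrafilter (Clop X) (clopen_nbhds X x)"
  using assms clopens_topspace clopens_Int clopens_Diff
  by (auto simp: ultrafilter_def clopen_nbhds_def)

lemma ultrafilter_Clop_eq_clopen_nbhds:
  assumes X: "compact_space X" and u: "ultrafilter (Clop X) u"
  obtains x where "x \<in> topspace X" "u = clopen_nbhds X x"
proof -
  have uc: "u \<subseteq> clopens X" and empty: "{} \<notin> u" and top: "topspace X \<in> u"
    and Int: "\<And>U V. U \<in> u \<Longrightarrow> V \<in> u \<Longrightarrow> U \<inter> V \<in> u"
    and compl: "\<And>U. U \<in> clopens X \<Longrightarrow> U \<in> u \<or> topspace X - U \<in> u"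
    using u unfolding ultrafilter_def by auto
  have Inter: "\<Inter>\<F> \<in> u" if "finite \<F>" "\<F> \<noteq> {}" "\<F> \<subseteq> u" for \<F>
    using that by (induction rule: finite_ne_induct) (auto intro: Int)
  have "\<Inter>\<F> \<noteq> {}" if "finite \<F>" "\<F> \<subseteq> u" for \<F>
    using that empty Inter[of \<F>] by (cases "\<F> = {}") auto
  moreover have "\<forall>C\<in>u. closedin X C"
    using uc by (auto simp: clopens_def)
  ultimately have "\<Inter>u \<noteq> {}"
    using X[unfolded compact_space_fip, rule_format, of u] by blast
  then obtain x where x: "x \<in> \<Inter>u"
    by blast
  have "U \<in> u" if "U \<in> clopen_nbhds X x" for U
  proof (rule ccontr)
    assume "U \<notin> u"
    then have "topspace X - U \<in> u"
      using compl that by (auto simp: clopen_nbhds_def)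
    then show False
      using x that by (auto simp: clopen_nbhds_def)
  qed
  moreover have "u \<subseteq> clopen_nbhds X x"
    using x uc by (auto simp: clopen_nbhds_def)
  moreover have "x \<in> topspace X"
    using x top by blast
  ultimately show ?thesis
    using that by blast
qed

lemma inj_on_clopen_nbhds:
  assumes "Hausdorff_space X" "zero_dim X"
  shows "inj_on (clopen_nbhds X) (topspace X)"
proof
  fix x y assume x: "x \<in> topspace X" and y: "y \<in> topspace X"
    and eq: "clopen_nbhds X x = clopen_nbhds X y"
  show "x = y"
  proof (rule ccontr)
    assume "x \<noteq> y"
    then have "openin X (topspace X - {y})" "x \<in> topspace X - {y}"
      using x y assms(1) by (auto intro: closedin_t1_singleton Hausdorff_imp_t1_space)
    then obtain C where "C \<in> clopens X" "x \<in> C" "y \<notin> C"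
      using assms(2) unfolding zero_dim_def by blast
    then show False
      using eq by (auto simp: clopen_nbhds_def)
  qed
qed

section \<open>Boolean algebras and the prime filter theorem\<close>

locale bool_alg =
  fixes B :: "'b balg"
  assumes is_balg: "is_balg B"
begin

abbreviation carrier where "carrier \<equiv> bcarrier B"
abbreviation zero ("\<zero>") where "\<zero> \<equiv> bzero B"
abbreviation one ("\<one>") where "\<one> \<equiv> bone B"
abbreviation join (infixl "\<squnion>" 65) where "a \<squnion> b \<equiv> bjoin B a b"
abbreviation meet (infixl "\<sqinter>" 70) where "a \<sqinter> b \<equiv> bmeet B a b"
abbreviation neg ("\<sim> _" [80] 80) where "\<sim> a \<equiv> bneg B a"
abbreviation leq (infix "\<sqsubseteq>" 50) where "a \<sqsubseteq> b \<equiv> ble B a b"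

lemma zero_closed [simp]: "\<zero> \<in> carrier"
  and one_closed [simp]: "\<one> \<in> carrier"
  and join_closed [simp]: "a \<in> carrier \<Longrightarrow> b \<in> carrier \<Longrightarrow> a \<squnion> b \<in> carrier"
  and meet_closed [simp]: "a \<in> carrier \<Longrightarrow> b \<in> carrier \<Longrightarrow> a \<sqinter> b \<in> carrier"
  and neg_closed [simp]: "a \<in> carrier \<Longrightarrow> \<sim> a \<in> carrier"
  using is_balg unfolding is_balg_def by blast+

context
  fixes a b c
  assumes a: "a \<in> carrier" and b: "b \<in> carrier" and c: "c \<in> carrier"
begin

lemma join_comm: "a \<squnion> b = b \<squnion> a"
  and meet_comm: "a \<sqinter> b = b \<sqinter> a"
  and join_meet_absorb: "a \<squnion> (a \<sqinter> b) = a"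
  and meet_join_absorb: "a \<sqinter> (a \<squnion> b) = a"
  and join_assoc: "a \<squnion> b \<squnion> c = a \<squnion> (b \<squnion> c)"
  and meet_assoc: "a \<sqinter> b \<sqinter> c = a \<sqinter> (b \<sqinter> c)"
  and meet_join_distrib: "a \<sqinter> (b \<squnion> c) = a \<sqinter> b \<squnion> a \<sqinter> c"
  and join_meet_distrib: "a \<squnion> b \<sqinter> c = (a \<squnion> b) \<sqinter> (a \<squnion> c)"
  and join_zero: "a \<squnion> \<zero> = a"
  and meet_one: "a \<sqinter> \<one> = a"
  and join_neg: "a \<squnion> \<sim> a = \<one>"
  and meet_neg: "a \<sqinter> \<sim> a = \<zero>"
  using is_balg a b c unfolding is_balg_def by blast+

end

lemma meet_idem: "a \<in> carrier \<Longrightarrow> a \<sqinter> a = a"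
  using meet_join_absorb[of a "a \<sqinter> a"] join_meet_absorb[of a a] by simp

lemma join_idem: "a \<in> carrier \<Longrightarrow> a \<squnion> a = a"
  using join_meet_absorb[of a "a \<squnion> a"] meet_join_absorb[of a a] by simp

lemma meet_zero: "a \<in> carrier \<Longrightarrow> a \<sqinter> \<zero> = \<zero>"
  using meet_neg[of a] meet_assoc[of a a "\<sim> a"] meet_idem[of a] by simp

lemma join_one: "a \<in> carrier \<Longrightarrow> a \<squnion> \<one> = \<one>"
  using join_neg[of a] join_assoc[of a a "\<sim> a"] join_idem[of a] by simp

lemma zero_join: "a \<in> carrier \<Longrightarrow> \<zero> \<squnion> a = a"
  using join_comm[of \<zero> a] join_zero[of a] by simp

lemma one_meet: "a \<in> carrier \<Longrightarrow> \<one> \<sqinter> a = a"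
  using meet_comm[of \<one> a] meet_one[of a] by simp

lemma leq_refl: "a \<in> carrier \<Longrightarrow> a \<sqsubseteq> a"
  by (simp add: ble_def meet_idem)

lemma leq_trans:
  assumes "a \<in> carrier" "b \<in> carrier" "c \<in> carrier" "a \<sqsubseteq> b" "b \<sqsubseteq> c"
  shows "a \<sqsubseteq> c"
  using assms meet_assoc[of a b c] by (simp add: ble_def)

lemma leq_antisym: "a \<in> carrier \<Longrightarrow> b \<in> carrier \<Longrightarrow> a \<sqsubseteq> b \<Longrightarrow> b \<sqsubseteq> a \<Longrightarrow> a = b"
  unfolding ble_def using meet_comm by force

lemma leq_iff_join: "a \<in> carrier \<Longrightarrow> b \<in> carrier \<Longrightarrow> a \<sqsubseteq> b \<longleftrightarrow> a \<squnion> b = b"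
  unfolding ble_def
  by (metis join_comm join_meet_absorb meet_comm meet_join_absorb)

lemma zero_leq: "a \<in> carrier \<Longrightarrow> \<zero> \<sqsubseteq> a"
  by (simp add: leq_iff_join zero_join)

lemma leq_one: "a \<in> carrier \<Longrightarrow> a \<sqsubseteq> \<one>"
  by (simp add: ble_def meet_one)

lemma meet_leq1: "a \<in> carrier \<Longrightarrow> b \<in> carrier \<Longrightarrow> a \<sqinter> b \<sqsubseteq> a"
  unfolding ble_def by (metis meet_assoc meet_comm meet_idem)

lemma meet_leq2: "a \<in> carrier \<Longrightarrow> b \<in> carrier \<Longrightarrow> a \<sqinter> b \<sqsubseteq> b"
  unfolding ble_def by (metis meet_assoc meet_idem)

lemma meet_greatest:
  "a \<in> carrier \<Longrightarrow> b \<in> carrier \<Longrightarrow> c \<in> carrier \<Longrightarrow> c \<sqsubseteq> a \<Longrightarrow> c \<sqsubseteq> b \<Longrightarrow> c \<sqsubseteq> a \<sqinter> b"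
  unfolding ble_def by (metis meet_assoc)

lemma join_upper1: "a \<in> carrier \<Longrightarrow> b \<in> carrier \<Longrightarrow> a \<sqsubseteq> a \<squnion> b"
  by (simp add: ble_def meet_join_absorb)

lemma join_upper2: "a \<in> carrier \<Longrightarrow> b \<in> carrier \<Longrightarrow> b \<sqsubseteq> a \<squnion> b"
  using join_upper1[of b a] join_comm[of a b] by simp

lemma join_least:
  "a \<in> carrier \<Longrightarrow> b \<in> carrier \<Longrightarrow> c \<in> carrier \<Longrightarrow> a \<sqsubseteq> c \<Longrightarrow> b \<sqsubseteq> c \<Longrightarrow> a \<squnion> b \<sqsubseteq> c"
  by (simp add: leq_iff_join join_assoc)

lemma meet_mono:
  assumes "a \<in> carrier" "b \<in> carrier" "a' \<in> carrier" "b' \<in> carrier" "a \<sqsubseteq> a'" "b \<sqsubseteq> b'"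
  shows "a \<sqinter> b \<sqsubseteq> a' \<sqinter> b'"
  using assms leq_trans[of "a \<sqinter> b" a a'] leq_trans[of "a \<sqinter> b" b b']
  by (simp add: meet_greatest meet_leq1 meet_leq2)

lemma join_mono:
  assumes "a \<in> carrier" "b \<in> carrier" "a' \<in> carrier" "b' \<in> carrier" "a \<sqsubseteq> a'" "b \<sqsubseteq> b'"
  shows "a \<squnion> b \<sqsubseteq> a' \<squnion> b'"
  using assms leq_trans[of a a' "a' \<squnion> b'"] leq_trans[of b b' "a' \<squnion> b'"]
  by (simp add: join_least join_upper1 join_upper2)

lemma neg_unique:
  assumes a: "a \<in> carrier" and x: "x \<in> carrier" and "a \<squnion> x = \<one>" "a \<sqinter> x = \<zero>"
  shows "x = \<sim> a"
proof -
  have "x = x \<sqinter> (a \<squnion> \<sim> a)"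
    using a x by (simp add: join_neg meet_one)
  also have "\<dots> = x \<sqinter> \<sim> a"
    using a x assms(4) by (simp add: meet_join_distrib meet_comm zero_join)
  also have "\<dots> = \<sim> a \<sqinter> (a \<squnion> x)"
    using a x
    by (simp add: meet_join_distrib meet_comm[of "\<sim> a" a] meet_comm[of x] meet_neg zero_join)
  also have "\<dots> = \<sim> a"
    using a assms(3) by (simp add: meet_one)
  finally show ?thesis .
qed

lemma neg_neg: "a \<in> carrier \<Longrightarrow> \<sim> \<sim> a = a"
  using neg_unique[of "\<sim> a" a] by (simp add: join_comm join_neg meet_comm meet_neg)

lemma neg_join:
  assumes a: "a \<in> carrier" and b: "b \<in> carrier"
  shows "\<sim> (a \<squnion> b) = \<sim> a \<sqinter> \<sim> b"
proof (rule sym, rule neg_unique)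
  have "a \<squnion> b \<squnion> \<sim> a = \<one>" "a \<squnion> b \<squnion> \<sim> b = \<one>"
    using a b by (metis join_assoc join_comm join_neg join_one neg_closed)+
  then show "a \<squnion> b \<squnion> \<sim> a \<sqinter> \<sim> b = \<one>"
    using a b by (simp add: join_meet_distrib meet_idem)
  have "\<sim> a \<sqinter> \<sim> b \<sqinter> a = \<zero>" "\<sim> a \<sqinter> \<sim> b \<sqinter> b = \<zero>"
    using a b by (metis meet_assoc meet_comm meet_neg meet_zero neg_closed)+
  then show "(a \<squnion> b) \<sqinter> (\<sim> a \<sqinter> \<sim> b) = \<zero>"
    using a b by (simp add: meet_comm[of "a \<squnion> b"] meet_join_distrib join_idem)
qed (use a b in auto)

definition bfilter :: "'b set \<Rightarrow> bool" where
  "bfilter F \<longleftrightarrow> F \<subseteq> carrier \<and> \<one> \<in> F \<and> (\<forall>a\<in>F. \<forall>b\<in>F. a \<sqinter> b \<in> F) \<and>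
     (\<forall>a\<in>F. \<forall>b\<in>carrier. a \<sqsubseteq> b \<longrightarrow> b \<in> F)"

definition bideal :: "'b set \<Rightarrow> bool" where
  "bideal I \<longleftrightarrow> I \<subseteq> carrier \<and> \<zero> \<in> I \<and> (\<forall>a\<in>I. \<forall>b\<in>I. a \<squnion> b \<in> I) \<and>
     (\<forall>a\<in>I. \<forall>b\<in>carrier. b \<sqsubseteq> a \<longrightarrow> b \<in> I)"

lemma bfilterD:
  assumes "bfilter F"
  shows "F \<subseteq> carrier" "\<one> \<in> F" "a \<in> F \<Longrightarrow> b \<in> F \<Longrightarrow> a \<sqinter> b \<in> F"
    "a \<in> F \<Longrightarrow> b \<in> carrier \<Longrightarrow> a \<sqsubseteq> b \<Longrightarrow> b \<in> F"
  using assms unfolding bfilter_def by blast+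

lemma bidealD:
  assumes "bideal I"
  shows "I \<subseteq> carrier" "\<zero> \<in> I" "a \<in> I \<Longrightarrow> b \<in> I \<Longrightarrow> a \<squnion> b \<in> I"
    "a \<in> I \<Longrightarrow> b \<in> carrier \<Longrightarrow> b \<sqsubseteq> a \<Longrightarrow> b \<in> I"
  using assms unfolding bideal_def by blast+

lemma bfilter_principal: "a \<in> carrier \<Longrightarrow> bfilter {c \<in> carrier. a \<sqsubseteq> c}"
  unfolding bfilter_def by (auto intro: leq_one meet_greatest leq_trans)

lemma bideal_principal: "a \<in> carrier \<Longrightarrow> bideal {c \<in> carrier. c \<sqsubseteq> a}"
  unfolding bideal_def by (auto intro: zero_leq join_least leq_trans)

lemma bfilter_Union_chain:
  assumes "C \<noteq> {}" "\<And>F. F \<in> C \<Longrightarrow> bfilter F" "chain\<^sub>\<subseteq> C"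
  shows "bfilter (\<Union>C)"
  unfolding bfilter_def
proof (intro conjI ballI impI)
  show "\<Union>C \<subseteq> carrier" "\<one> \<in> \<Union>C"
    using assms(1,2) bfilterD(1,2) by blast+
next
  fix a b assume "a \<in> \<Union>C" "b \<in> \<Union>C"
  then obtain F where "F \<in> C" "a \<in> F" "b \<in> F"
    using assms(3) unfolding chain_subset_def by blast
  then show "a \<sqinter> b \<in> \<Union>C"
    using assms(2) bfilterD(3) by blast
next
  fix a b assume "a \<in> \<Union>C" "b \<in> carrier" "a \<sqsubseteq> b"
  then show "b \<in> \<Union>C"
    using assms(2) bfilterD(4) by blast
qed

lemma bfilter_adjoin:
  assumes M: "bfilter M" and x: "x \<in> carrier"
  defines "G \<equiv> {c \<in> carrier. \<exists>g\<in>M. g \<sqinter> x \<sqsubseteq> c}"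
  shows "bfilter G" "M \<subseteq> G" "x \<in> G"
proof -
  note MD = bfilterD[OF M]
  show "bfilter G"
    unfolding bfilter_def
  proof (intro conjI ballI impI)
    show "G \<subseteq> carrier"
      by (auto simp: G_def)
    show "\<one> \<in> G"
      using MD(2) x by (auto simp: G_def intro!: bexI[of _ \<one>] leq_one)
  next
    fix c d assume "c \<in> G" "d \<in> G"
    then obtain g1 g2 where g: "g1 \<in> M" "g2 \<in> M" "g1 \<sqinter> x \<sqsubseteq> c" "g2 \<sqinter> x \<sqsubseteq> d"
      and cd: "c \<in> carrier" "d \<in> carrier"
      by (auto simp: G_def)
    have gc: "g1 \<in> carrier" "g2 \<in> carrier"
      using g(1,2) MD(1) by auto
    then have "g1 \<sqinter> g2 \<sqinter> x \<sqsubseteq> g1 \<sqinter> x" "g1 \<sqinter> g2 \<sqinter> x \<sqsubseteq> g2 \<sqinter> x"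
      using x by (auto intro!: meet_mono meet_leq1 meet_leq2 leq_refl)
    then have "g1 \<sqinter> g2 \<sqinter> x \<sqsubseteq> c" "g1 \<sqinter> g2 \<sqinter> x \<sqsubseteq> d"
      using gc x cd g(3,4) by (auto intro: leq_trans[of _ "g1 \<sqinter> x"] leq_trans[of _ "g2 \<sqinter> x"])
    then have "g1 \<sqinter> g2 \<sqinter> x \<sqsubseteq> c \<sqinter> d"
      using gc x cd by (simp add: meet_greatest)
    then show "c \<sqinter> d \<in> G"
      using MD(3)[OF g(1,2)] cd by (auto simp: G_def)
  next
    fix c d assume "c \<in> G" "d \<in> carrier" "c \<sqsubseteq> d"
    then obtain g where "g \<in> M" "g \<sqinter> x \<sqsubseteq> c" "c \<in> carrier"
      by (auto simp: G_def)
    then show "d \<in> G"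
      using MD(1) x \<open>d \<in> carrier\<close> \<open>c \<sqsubseteq> d\<close>
      by (auto simp: G_def intro!: bexI[of _ g] leq_trans[of _ c])
  qed
  show "M \<subseteq> G"
    using MD(1) x by (auto simp: G_def intro: meet_leq1)
  show "x \<in> G"
    using MD(2) x by (auto simp: G_def one_meet intro!: bexI[of _ \<one>] leq_refl)
qed

lemma maximal_bfilter_prime:
  assumes I: "bideal I" and M: "bfilter M" "M \<inter> I = {}"
    and max: "\<And>G. bfilter G \<Longrightarrow> G \<inter> I = {} \<Longrightarrow> M \<subseteq> G \<Longrightarrow> G = M"
    and a: "a \<in> carrier"
  shows "a \<in> M \<or> \<sim> a \<in> M"
proof (rule ccontr)
  note MD = bfilterD[OF M(1)] and ID = bidealD[OF I]
  have meets: "\<exists>g\<in>M. \<exists>c\<in>I. g \<sqinter> x \<sqsubseteq> c" if "x \<in> carrier" "x \<notin> M" for x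
  proof -
    let ?G = "{c \<in> carrier. \<exists>g\<in>M. g \<sqinter> x \<sqsubseteq> c}"
    have "?G \<inter> I \<noteq> {}"
      using bfilter_adjoin[OF M(1) that(1)] max that(2) by blast
    then show ?thesis
      by blast
  qed
  assume "\<not> (a \<in> M \<or> \<sim> a \<in> M)"
  then obtain g1 c1 g2 c2 where g: "g1 \<in> M" "g2 \<in> M" "c1 \<in> I" "c2 \<in> I"
    and le: "g1 \<sqinter> a \<sqsubseteq> c1" "g2 \<sqinter> \<sim> a \<sqsubseteq> c2"
    using meets[of a] meets[of "\<sim> a"] a by auto
  have car: "g1 \<in> carrier" "g2 \<in> carrier" "c1 \<in> carrier" "c2 \<in> carrier"
    using g MD(1) ID(1) by auto
  let ?g = "g1 \<sqinter> g2"
  have "?g \<sqinter> a \<sqsubseteq> c1"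
    by (rule leq_trans[of _ "g1 \<sqinter> a"]) (use car a le in \<open>auto intro!: meet_mono meet_leq1 leq_refl\<close>)
  moreover have "?g \<sqinter> \<sim> a \<sqsubseteq> c2"
    by (rule leq_trans[of _ "g2 \<sqinter> \<sim> a"]) (use car a le in \<open>auto intro!: meet_mono meet_leq2 leq_refl\<close>)
  moreover have "?g = ?g \<sqinter> a \<squnion> ?g \<sqinter> \<sim> a"
    using car a by (metis join_neg meet_closed meet_join_distrib meet_one neg_closed)
  ultimately have "?g \<sqsubseteq> c1 \<squnion> c2"
    using car a by (metis join_mono meet_closed neg_closed)
  then have "?g \<in> I"
    using ID(4)[OF ID(3)[OF g(3,4)]] car by simp
  then show False
    using MD(3)[OF g(1,2)] M(2) by blast
qed

theorem ultrafilter_exists: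
  assumes F: "bfilter F" and I: "bideal I" and FI: "F \<inter> I = {}"
  obtains u where "ultrafilter B u" "F \<subseteq> u" "u \<inter> I = {}"
proof -
  define \<A> where "\<A> = {G. bfilter G \<and> F \<subseteq> G \<and> G \<inter> I = {}}"
  have "\<exists>U\<in>\<A>. \<forall>G\<in>C. G \<subseteq> U" if "C \<in> chains \<A>" for C
  proof (cases "C = {}")
    case True
    then show ?thesis
      using F FI by (auto simp: \<A>_def)
  next
    case False
    then have "\<Union>C \<in> \<A>"
      using that bfilter_Union_chain[of C] unfolding \<A>_def chains_def by blast
    then show ?thesis
      by blast
  qed
  then obtain M where M: "M \<in> \<A>" and max: "\<forall>G\<in>\<A>. M \<subseteq> G \<longrightarrow> G = M"
    using Zorn_Lemma2[of \<A>] by blast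
  then have MF: "bfilter M" "F \<subseteq> M" "M \<inter> I = {}"
    by (auto simp: \<A>_def)
  have "a \<in> M \<or> \<sim> a \<in> M" if "a \<in> carrier" for a
    using maximal_bfilter_prime[OF I MF(1,3) _ that] max MF(2) by (auto simp: \<A>_def)
  moreover have "\<zero> \<notin> M"
    using bidealD(2)[OF I] MF(3) by blast
  ultimately have "ultrafilter B M"
    using bfilterD[OF MF(1)] unfolding ultrafilter_def by blast
  then show ?thesis
    using that MF by blast
qed

lemma ultrafilterD:
  assumes "ultrafilter B u"
  shows "bfilter u" "\<zero> \<notin> u" "a \<in> carrier \<Longrightarrow> a \<in> u \<or> \<sim> a \<in> u"
  using assms unfolding ultrafilter_def bfilter_def by blast+

lemma ultrafilter_neg_iff:
  assumes u: "ultrafilter B u" and a: "a \<in> carrier"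
  shows "\<sim> a \<in> u \<longleftrightarrow> a \<notin> u"
  using ultrafilterD[OF u] bfilterD(3)[OF ultrafilterD(1)[OF u], of a "\<sim> a"] a
  by (auto simp: meet_neg)

lemma ultrafilter_meet_iff:
  assumes u: "ultrafilter B u" and a: "a \<in> carrier" and b: "b \<in> carrier"
  shows "a \<sqinter> b \<in> u \<longleftrightarrow> a \<in> u \<and> b \<in> u"
  using bfilterD[OF ultrafilterD(1)[OF u]] a b meet_leq1[OF a b] meet_leq2[OF a b]
  by (meson meet_closed)

lemma ultrafilter_join_iff:
  assumes u: "ultrafilter B u" and a: "a \<in> carrier" and b: "b \<in> carrier"
  shows "a \<squnion> b \<in> u \<longleftrightarrow> a \<in> u \<or> b \<in> u"
proof
  assume "a \<squnion> b \<in> u"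
  then have "\<sim> (\<sim> a \<sqinter> \<sim> b) \<in> u"
    using a b by (simp add: neg_join[symmetric] neg_neg)
  then show "a \<in> u \<or> b \<in> u"
    using u a b by (simp add: ultrafilter_neg_iff ultrafilter_meet_iff)
next
  assume "a \<in> u \<or> b \<in> u"
  then show "a \<squnion> b \<in> u"
    using bfilterD(4)[OF ultrafilterD(1)[OF u]] a b join_upper1[OF a b] join_upper2[OF a b]
    by (meson join_closed)
qed

lemma ultrafilter_subset_imp_eq:
  assumes u: "ultrafilter B u" and v: "ultrafilter B v" and "u \<subseteq> v"
  shows "u = v"
  using assms bfilterD(1)[OF ultrafilterD(1)[OF v]] ultrafilter_neg_iff[OF u] ultrafilter_neg_iff[OF v]
  by blast

section \<open>The Stone space of a Boolean algebra\<close>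

lemma mem_stone_map: "u \<in> stone_map B a \<longleftrightarrow> ultrafilter B u \<and> a \<in> u"
  by (simp add: stone_map_def ults_def)

lemma stone_map_subset_ults: "stone_map B a \<subseteq> ults B"
  by (auto simp: stone_map_def)

lemma stone_map_meet: "a \<in> carrier \<Longrightarrow> b \<in> carrier \<Longrightarrow> stone_map B (a \<sqinter> b) = stone_map B a \<inter> stone_map B b"
  by (auto simp: mem_stone_map ultrafilter_meet_iff)

lemma stone_map_join: "a \<in> carrier \<Longrightarrow> b \<in> carrier \<Longrightarrow> stone_map B (a \<squnion> b) = stone_map B a \<union> stone_map B b"
  by (auto simp: mem_stone_map ultrafilter_join_iff)

lemma stone_map_neg: "a \<in> carrier \<Longrightarrow> stone_map B (\<sim> a) = ults B - stone_map B a"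
  by (auto simp: mem_stone_map ultrafilter_neg_iff ults_def)

lemma stone_map_zero: "stone_map B \<zero> = {}"
  by (auto simp: mem_stone_map dest: ultrafilterD(2))

lemma stone_map_one: "stone_map B \<one> = ults B"
  by (auto simp: mem_stone_map ults_def ultrafilter_def)

lemma stone_map_subset_iff:
  assumes a: "a \<in> carrier" and b: "b \<in> carrier"
  shows "stone_map B a \<subseteq> stone_map B b \<longleftrightarrow> a \<sqsubseteq> b"
proof
  assume "a \<sqsubseteq> b"
  then show "stone_map B a \<subseteq> stone_map B b"
    using b by (auto simp: mem_stone_map ultrafilter_def)
next
  assume sub: "stone_map B a \<subseteq> stone_map B b"
  show "a \<sqsubseteq> b"
  proof (rule ccontr)
    assume "\<not> a \<sqsubseteq> b"
    then have "{c \<in> carrier. a \<sqsubseteq> c} \<inter> {c \<in> carrier. c \<sqsubseteq> b} = {}"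
      using a b leq_trans by blast
    then obtain u where "ultrafilter B u" "{c \<in> carrier. a \<sqsubseteq> c} \<subseteq> u"
      "u \<inter> {c \<in> carrier. c \<sqsubseteq> b} = {}"
      using ultrafilter_exists[OF bfilter_principal[OF a] bideal_principal[OF b]] by blast
    then have "u \<in> stone_map B a" "b \<notin> u"
      using a b leq_refl[OF a] leq_refl[OF b] by (auto simp: mem_stone_map)
    then show False
      using sub by (auto simp: mem_stone_map)
  qed
qed

lemma inj_on_stone_map: "inj_on (stone_map B) carrier"
  by (intro inj_onI leq_antisym) (auto simp: stone_map_subset_iff[symmetric])

lemma topspace_Ult: "topspace (Ult B) = ults B"
  unfolding Ult_def topology_generated_by_topspace
  using stone_map_subset_ults stone_map_one one_closed by blast

lemma openin_Ult_stone_map: "a \<in> carrier \<Longrightarrow> openin (Ult B) (stone_map B a)"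
  unfolding Ult_def by (rule topology_generated_by_Basis) blast

text \<open>The sets \<open>stone_map B a\<close> form a basis, as they are closed under finite intersections.\<close>

lemma openin_UltD:
  assumes "openin (Ult B) W"
  shows "W \<subseteq> ults B \<and> (\<forall>u\<in>W. \<exists>a\<in>carrier. u \<in> stone_map B a \<and> stone_map B a \<subseteq> W)"
proof -
  have "generate_topology_on (stone_map B ` carrier) W"
    using assms by (simp add: Ult_def openin_topology_generated_by_iff)
  then show ?thesis
  proof (induction rule: generate_topology_on.induct)
    case (Int V W)
    have "\<exists>e\<in>carrier. u \<in> stone_map B e \<and> stone_map B e \<subseteq> V \<inter> W" if u: "u \<in> V \<inter> W" for u
    proof -
      obtain c where c: "c \<in> carrier" "u \<in> stone_map B c" "stone_map B c \<subseteq> V"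
        using Int.IH(1) u by blast
      obtain d where d: "d \<in> carrier" "u \<in> stone_map B d" "stone_map B d \<subseteq> W"
        using Int.IH(2) u by blast
      have "u \<in> stone_map B (c \<sqinter> d) \<and> stone_map B (c \<sqinter> d) \<subseteq> V \<inter> W"
        using c d stone_map_meet[OF c(1) d(1)] by blast
      then show ?thesis
        using meet_closed[OF c(1) d(1)] by blast
    qed
    then show ?case
      using Int.IH(1) by blast
  next
    case (UN K)
    have "\<exists>e\<in>carrier. u \<in> stone_map B e \<and> stone_map B e \<subseteq> \<Union>K" if u: "u \<in> \<Union>K" for u
    proof -
      obtain k where k: "k \<in> K" "u \<in> k"
        using u by blast
      then obtain e where "e \<in> carrier" "u \<in> stone_map B e" "stone_map B e \<subseteq> k"
        using UN.IH[of k] by blast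
      then show ?thesis
        using k by blast
    qed
    moreover have "\<Union>K \<subseteq> ults B"
      using UN.IH by blast
    ultimately show ?case
      by blast
  qed (use stone_map_subset_ults in auto)
qed

lemma openin_Ult:
  "openin (Ult B) W \<longleftrightarrow>
     W \<subseteq> ults B \<and> (\<forall>u\<in>W. \<exists>a\<in>carrier. u \<in> stone_map B a \<and> stone_map B a \<subseteq> W)"
proof
  assume W: "W \<subseteq> ults B \<and> (\<forall>u\<in>W. \<exists>a\<in>carrier. u \<in> stone_map B a \<and> stone_map B a \<subseteq> W)"
  show "openin (Ult B) W"
  proof (subst openin_subopen, intro ballI)
    fix u assume "u \<in> W"
    then obtain a where "a \<in> carrier" "u \<in> stone_map B a" "stone_map B a \<subseteq> W"
      using W by blast
    then show "\<exists>T. openin (Ult B) T \<and> u \<in> T \<and> T \<subseteq> W"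
      using openin_Ult_stone_map by blast
  qed
qed (rule openin_UltD)

lemma closedin_Ult_stone_map: "a \<in> carrier \<Longrightarrow> closedin (Ult B) (stone_map B a)"
  using stone_map_subset_ults stone_map_neg[of a] openin_Ult_stone_map[of "\<sim> a"]
  by (simp add: closedin_def topspace_Ult)

lemma stone_map_in_clopens: "a \<in> carrier \<Longrightarrow> stone_map B a \<in> clopens (Ult B)"
  by (simp add: clopens_def openin_Ult_stone_map closedin_Ult_stone_map)

lemma bideal_finitely_covered:
  "bideal {a \<in> carrier. \<exists>\<F>. finite \<F> \<and> \<F> \<subseteq> \<U> \<and> stone_map B a \<subseteq> \<Union>\<F>}"
  unfolding bideal_def
proof (intro conjI ballI impI)
  show "\<zero> \<in> {a \<in> carrier. \<exists>\<F>. finite \<F> \<and> \<F> \<subseteq> \<U> \<and> stone_map B a \<subseteq> \<Union>\<F>}"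
    by (auto simp: stone_map_zero)
next
  fix a b assume "a \<in> {a \<in> carrier. \<exists>\<F>. finite \<F> \<and> \<F> \<subseteq> \<U> \<and> stone_map B a \<subseteq> \<Union>\<F>}"
    "b \<in> {a \<in> carrier. \<exists>\<F>. finite \<F> \<and> \<F> \<subseteq> \<U> \<and> stone_map B a \<subseteq> \<Union>\<F>}"
  then obtain \<F> \<G> where "a \<in> carrier" "b \<in> carrier" "finite \<F>" "\<F> \<subseteq> \<U>" "stone_map B a \<subseteq> \<Union>\<F>"
    "finite \<G>" "\<G> \<subseteq> \<U>" "stone_map B b \<subseteq> \<Union>\<G>"
    by blast
  then show "a \<squnion> b \<in> {a \<in> carrier. \<exists>\<F>. finite \<F> \<and> \<F> \<subseteq> \<U> \<and> stone_map B a \<subseteq> \<Union>\<F>}"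
    by (auto simp: stone_map_join intro!: exI[of _ "\<F> \<union> \<G>"])
next
  fix a b assume "a \<in> {a \<in> carrier. \<exists>\<F>. finite \<F> \<and> \<F> \<subseteq> \<U> \<and> stone_map B a \<subseteq> \<Union>\<F>}"
    "b \<in> carrier" "b \<sqsubseteq> a"
  then show "b \<in> {a \<in> carrier. \<exists>\<F>. finite \<F> \<and> \<F> \<subseteq> \<U> \<and> stone_map B a \<subseteq> \<Union>\<F>}"
    using stone_map_subset_iff[of b a] by blast
qed auto

lemma compact_space_Ult: "compact_space (Ult B)"
  unfolding compact_space_alt topspace_Ult
proof (intro allI impI)
  fix \<U> assume \<U>: "(\<forall>U\<in>\<U>. openin (Ult B) U) \<and> ults B \<subseteq> \<Union>\<U>"
  define I where "I = {a \<in> carrier. \<exists>\<F>. finite \<F> \<and> \<F> \<subseteq> \<U> \<and> stone_map B a \<subseteq> \<Union>\<F>}"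
  show "\<exists>\<F>. finite \<F> \<and> \<F> \<subseteq> \<U> \<and> ults B \<subseteq> \<Union>\<F>"
  proof (rule ccontr)
    assume "\<nexists>\<F>. finite \<F> \<and> \<F> \<subseteq> \<U> \<and> ults B \<subseteq> \<Union>\<F>"
    then have "\<one> \<notin> I"
      using stone_map_one by (auto simp: I_def)
    moreover have "{c \<in> carrier. \<one> \<sqsubseteq> c} = {\<one>}"
      using leq_antisym[OF _ one_closed] leq_one leq_refl[OF one_closed] by auto
    ultimately have "{c \<in> carrier. \<one> \<sqsubseteq> c} \<inter> I = {}"
      by simp
    then obtain u where u: "ultrafilter B u" "u \<inter> I = {}"
      by (rule ultrafilter_exists[OF bfilter_principal[OF one_closed]
            bideal_finitely_covered[of \<U>, folded I_def]])
    then obtain W where W: "W \<in> \<U>" "u \<in> W"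
      using \<U> by (auto simp: ults_def)
    then have "openin (Ult B) W"
      using \<U> by blast
    then obtain a where "a \<in> carrier" "u \<in> stone_map B a" "stone_map B a \<subseteq> W"
      using W(2) unfolding openin_Ult by blast
    then have "a \<in> carrier" "a \<in> u" "stone_map B a \<subseteq> W"
      by (auto simp: mem_stone_map)
    then have "a \<in> u \<inter> I"
      using \<open>W \<in> \<U>\<close> by (auto simp: I_def intro!: exI[of _ "{W}"])
    then show False
      using u(2) by blast
  qed
qed

lemma Hausdorff_space_Ult: "Hausdorff_space (Ult B)"
  unfolding Hausdorff_space_def topspace_Ult
proof (intro allI impI)
  fix u v assume "u \<in> ults B \<and> v \<in> ults B \<and> u \<noteq> v"
  then have u: "ultrafilter B u" and v: "ultrafilter B v" and "\<not> u \<subseteq> v"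
    using ultrafilter_subset_imp_eq by (auto simp: ults_def)
  then obtain a where a: "a \<in> carrier" "a \<in> u" "a \<notin> v"
    using bfilterD(1)[OF ultrafilterD(1)[OF u]] by blast
  then have "u \<in> stone_map B a" "v \<in> stone_map B (\<sim> a)"
    using u v by (auto simp: mem_stone_map ultrafilter_neg_iff)
  moreover have "disjnt (stone_map B a) (stone_map B (\<sim> a))"
    using a by (simp add: stone_map_neg disjnt_def)
  ultimately show "\<exists>U V. openin (Ult B) U \<and> openin (Ult B) V \<and> u \<in> U \<and> v \<in> V \<and> disjnt U V"
    using a openin_Ult_stone_map neg_closed by blast
qed

lemma zero_dim_Ult: "zero_dim (Ult B)"
  unfolding zero_dim_def openin_Ult using stone_map_in_clopens by blast

lemma Stone_space_Ult: "Stone_space (Ult B)"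
  by (simp add: Stone_space_def compact_space_Ult Hausdorff_space_Ult zero_dim_Ult)

lemma Union_stone_map_finite:
  "finite \<F> \<Longrightarrow> \<F> \<subseteq> stone_map B ` carrier \<Longrightarrow> \<Union>\<F> \<in> stone_map B ` carrier"
proof (induction rule: finite_induct)
  case empty
  then show ?case
    using stone_map_zero zero_closed by (metis Union_empty image_eqI)
next
  case (insert x F)
  then show ?case
    by (auto simp: image_iff) (metis join_closed stone_map_join)
qed

theorem bij_betw_stone_map: "bij_betw (stone_map B) carrier (clopens (Ult B))"
proof -
  have "W \<in> stone_map B ` carrier" if W: "W \<in> clopens (Ult B)" for W
  proof -
    let ?\<U> = "stone_map B ` {a \<in> carrier. stone_map B a \<subseteq> W}"
    have "W \<subseteq> \<Union>?\<U>"
      using W by (auto simp: clopens_def openin_Ult)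
    moreover have "compactin (Ult B) W"
      using W compact_space_Ult closedin_compact_space by (auto simp: clopens_def)
    ultimately obtain \<F> where \<F>: "finite \<F>" "\<F> \<subseteq> ?\<U>" "W \<subseteq> \<Union>\<F>"
      using compactinD[of "Ult B" W ?\<U>] openin_Ult_stone_map by blast
    then have "W = \<Union>\<F>" "\<F> \<subseteq> stone_map B ` carrier"
      by blast+
    then show ?thesis
      using Union_stone_map_finite[OF \<F>(1)] by simp
  qed
  then show ?thesis
    using inj_on_stone_map stone_map_in_clopens by (auto simp: bij_betw_def)
qed

end

lemma relcomp_map_prod_image:
  assumes "inj_on g M" "Range R \<subseteq> M" "Domain S \<subseteq> M"
  shows "map_prod f g ` R O map_prod g h ` S = map_prod f h ` (R O S)"
proof
  show "map_prod f g ` R O map_prod g h ` S \<subseteq> map_prod f h ` (R O S)"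
  proof clarify
    fix a b b' c assume "(a, b) \<in> R" "(b', c) \<in> S" "g b = g b'"
    moreover from this have "b = b'"
      using assms by (auto dest: inj_onD)
    ultimately show "(f a, h c) \<in> map_prod f h ` (R O S)"
      by force
  qed
qed force

definition balg_iso :: "'b balg \<Rightarrow> 'd balg \<Rightarrow> ('b \<Rightarrow> 'd) \<Rightarrow> bool" where
  "balg_iso A A' f \<longleftrightarrow> bij_betw f (bcarrier A) (bcarrier A') \<and>
     f (bzero A) = bzero A' \<and> f (bone A) = bone A' \<and>
     (\<forall>a\<in>bcarrier A. \<forall>b\<in>bcarrier A.
        f (bjoin A a b) = bjoin A' (f a) (f b) \<and> f (bmeet A a b) = bmeet A' (f a) (f b))"

lemma balg_iso_id: "balg_iso A A id"
  by (simp add: balg_iso_def)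

lemma balg_isoD:
  assumes "balg_iso A A' f"
  shows "bij_betw f (bcarrier A) (bcarrier A')" "f (bzero A) = bzero A'" "f (bone A) = bone A'"
    "a \<in> bcarrier A \<Longrightarrow> b \<in> bcarrier A \<Longrightarrow> f (bjoin A a b) = bjoin A' (f a) (f b)"
    "a \<in> bcarrier A \<Longrightarrow> b \<in> bcarrier A \<Longrightarrow> f (bmeet A a b) = bmeet A' (f a) (f b)"
  using assms unfolding balg_iso_def by blast+

lemma balg_iso_ble_iff:
  assumes "is_balg A" and f: "balg_iso A A' f" and a: "a \<in> bcarrier A" and b: "b \<in> bcarrier A"
  shows "ble A' (f a) (f b) \<longleftrightarrow> ble A a b"
proof -
  interpret bool_alg A
    by (rule bool_alg.intro) fact
  have "inj_on f (bcarrier A)"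
    using balg_isoD(1)[OF f] by (rule bij_betw_imp_inj_on)
  then have "f (bmeet A a b) = f a \<longleftrightarrow> bmeet A a b = a"
    using a b by (simp add: inj_on_eq_iff)
  then show ?thesis
    using balg_isoD(5)[OF f a b] by (simp add: ble_def)
qed

lemma mem_map_prod_image:
  "(x, y) \<in> map_prod f g ` T \<longleftrightarrow> (\<exists>a b. (a, b) \<in> T \<and> x = f a \<and> y = g b)"
  by force

lemma subordinationD:
  assumes "subordination A B T"
  shows "T \<subseteq> bcarrier A \<times> bcarrier B" "(bzero A, bzero B) \<in> T" "(bone A, bone B) \<in> T"
    "(a, c) \<in> T \<Longrightarrow> (b, c) \<in> T \<Longrightarrow> (bjoin A a b, c) \<in> T"
    "(a, c) \<in> T \<Longrightarrow> (a, d) \<in> T \<Longrightarrow> (a, bmeet B c d) \<in> T"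
    "a \<in> bcarrier A \<Longrightarrow> d \<in> bcarrier B \<Longrightarrow> ble A a b \<Longrightarrow> (b, c) \<in> T \<Longrightarrow> ble B c d \<Longrightarrow>
      (a, d) \<in> T"
  using assms unfolding subordination_def by blast+

lemma subordination_map_prod_image:
  assumes A: "is_balg A" and B: "is_balg B" and f: "balg_iso A A' f" and g: "balg_iso B B' g"
    and T: "subordination A B T"
  shows "subordination A' B' (map_prod f g ` T)"
proof -
  note fD = balg_isoD[OF f] and gD = balg_isoD[OF g] and TD = subordinationD[OF T]
  have finj: "inj_on f (bcarrier A)" and ginj: "inj_on g (bcarrier B)"
    using fD(1) gD(1) bij_betw_imp_inj_on by blast+
  show ?thesis
    unfolding subordination_def
  proof (intro conjI allI impI)
    show "map_prod f g ` T \<subseteq> bcarrier A' \<times> bcarrier B'"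
      using TD(1) fD(1) gD(1) by (auto simp: bij_betw_def)
    show "(bzero A', bzero B') \<in> map_prod f g ` T" "(bone A', bone B') \<in> map_prod f g ` T"
      using TD(2,3) fD(2,3) gD(2,3) unfolding mem_map_prod_image by metis+
  next
    fix a' b' c' assume "(a', c') \<in> map_prod f g ` T \<and> (b', c') \<in> map_prod f g ` T"
    then obtain a b c c2 where ac: "(a, c) \<in> T" and bc: "(b, c2) \<in> T"
      and eq: "a' = f a" "b' = f b" "c' = g c" "c' = g c2"
      unfolding mem_map_prod_image by blast
    then have "c = c2"
      using TD(1) ginj by (auto dest: inj_onD)
    then have "(bjoin A a b, c) \<in> T"
      using TD(4) ac bc by blast
    moreover have "f (bjoin A a b) = bjoin A' a' b'"
      using ac bc TD(1) eq fD(4) by blast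
    ultimately show "(bjoin A' a' b', c') \<in> map_prod f g ` T"
      using eq(3) unfolding mem_map_prod_image by metis
  next
    fix a' c' d' assume "(a', c') \<in> map_prod f g ` T \<and> (a', d') \<in> map_prod f g ` T"
    then obtain a a2 c d where ac: "(a, c) \<in> T" and ad: "(a2, d) \<in> T"
      and eq: "a' = f a" "a' = f a2" "c' = g c" "d' = g d"
      unfolding mem_map_prod_image by blast
    then have "a = a2"
      using TD(1) finj by (auto dest: inj_onD)
    then have "(a, bmeet B c d) \<in> T"
      using TD(5) ac ad by blast
    moreover have "g (bmeet B c d) = bmeet B' c' d'"
      using ac ad TD(1) eq gD(5) by blast
    ultimately show "(a', bmeet B' c' d') \<in> map_prod f g ` T"
      using eq(1) unfolding mem_map_prod_image by metis
  next
    fix a' b' c' d'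
    assume H: "a' \<in> bcarrier A' \<and> d' \<in> bcarrier B' \<and> ble A' a' b' \<and> (b', c') \<in> map_prod f g ` T \<and>
      ble B' c' d'"
    then obtain b c where bc: "(b, c) \<in> T" "b' = f b" "c' = g c"
      unfolding mem_map_prod_image by blast
    obtain a d where ad: "a \<in> bcarrier A" "a' = f a" "d \<in> bcarrier B" "d' = g d"
      using H fD(1) gD(1) unfolding bij_betw_def by blast
    have "ble A' (f a) (f b)" "ble B' (g c) (g d)"
      using H ad(2,4) bc(2,3) by simp_all
    moreover have "b \<in> bcarrier A" "c \<in> bcarrier B"
      using bc(1) TD(1) by auto
    ultimately have "ble A a b" "ble B c d"
      using ad balg_iso_ble_iff[OF A f] balg_iso_ble_iff[OF B g] by simp_all
    then have "(a, d) \<in> T"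
      using TD(6) ad bc(1) by blast
    then show "(a', d') \<in> map_prod f g ` T"
      using ad unfolding mem_map_prod_image by blast
  qed
qed

lemma (in bool_alg) balg_iso_stone_map: "balg_iso B (Clop (Ult B)) (stone_map B)"
  using bij_betw_stone_map
  by (simp add: balg_iso_def stone_map_zero stone_map_one topspace_Ult stone_map_join stone_map_meet)

section \<open>Stone duality for points and clopens\<close>

lemma eq_map_prod_imageI:
  assumes "Q \<subseteq> f ` A \<times> g ` B" "R \<subseteq> A \<times> B"
    and "\<And>x y. x \<in> A \<Longrightarrow> y \<in> B \<Longrightarrow> (f x, g y) \<in> Q \<longleftrightarrow> (x, y) \<in> R"
  shows "Q = map_prod f g ` R"
proof
  show "Q \<subseteq> map_prod f g ` R"
  proof clarify
    fix p q assume "(p, q) \<in> Q"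
    then obtain x y where "x \<in> A" "y \<in> B" "p = f x" "q = g y" "(f x, g y) \<in> Q"
      using assms(1) by blast
    then show "(p, q) \<in> map_prod f g ` R"
      using assms(3) by force
  qed
  show "map_prod f g ` R \<subseteq> Q"
    using assms(2,3) by force
qed

lemma topspace_Ult_Clop: "topspace (Ult (Clop X)) = ults (Clop X)"
  by (rule bool_alg.topspace_Ult[OF bool_alg.intro[OF is_balg_Clop]])

lemma ults_Clop_eq_image:
  assumes "compact_space X"
  shows "ults (Clop X) = clopen_nbhds X ` topspace X"
proof
  show "ults (Clop X) \<subseteq> clopen_nbhds X ` topspace X"
    using ultrafilter_Clop_eq_clopen_nbhds[OF assms] by (auto simp: ults_def)
  show "clopen_nbhds X ` topspace X \<subseteq> ults (Clop X)"
    using ultrafilter_clopen_nbhds[of _ X] by (auto simp: ults_def)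
qed

lemma bij_betw_clopen_nbhds:
  assumes "Stone_space X"
  shows "bij_betw (clopen_nbhds X) (topspace X) (ults (Clop X))"
  using assms ults_Clop_eq_image[of X] inj_on_clopen_nbhds[of X]
  by (simp add: bij_betw_def Stone_space_def)

lemma continuous_map_clopen_nbhds: "continuous_map X (Ult (Clop X)) (clopen_nbhds X)"
proof -
  interpret bool_alg "Clop X"
    by (rule bool_alg.intro[OF is_balg_Clop])
  have "clopen_nbhds X -` stone_map (Clop X) V \<inter> topspace X = V" if "V \<in> clopens X" for V
    using that clopens_subset_topspace[of V X] ultrafilter_clopen_nbhds[of _ X]
    by (auto simp: mem_stone_map clopen_nbhds_def)
  moreover have "\<Union>(stone_map (Clop X) ` clopens X) = ults (Clop X)"
    using topspace_Ult by (simp add: Ult_def)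
  ultimately show ?thesis
    unfolding Ult_def
    by (intro continuous_on_generated_topo)
      (auto simp: clopens_def ults_def intro: ultrafilter_clopen_nbhds)
qed

theorem homeomorphic_map_clopen_nbhds:
  assumes "Stone_space X"
  shows "homeomorphic_map X (Ult (Clop X)) (clopen_nbhds X)"
proof (rule bijective_closed_imp_homeomorphic_map)
  show "continuous_map X (Ult (Clop X)) (clopen_nbhds X)"
    by (rule continuous_map_clopen_nbhds)
  then show "closed_map X (Ult (Clop X)) (clopen_nbhds X)"
    using assms bool_alg.Hausdorff_space_Ult[OF bool_alg.intro[OF is_balg_Clop]]
    by (intro continuous_imp_closed_map) (auto simp: Stone_space_def)
  show "clopen_nbhds X ` topspace X = topspace (Ult (Clop X))"
    "inj_on (clopen_nbhds X) (topspace X)"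
    using bij_betw_clopen_nbhds[OF assms] by (auto simp: bij_betw_def topspace_Ult_Clop)
qed

theorem R_of_S_of:
  assumes X: "Stone_space X" and Y: "Stone_space Y" and R: "closedin (prod_topology X Y) R"
  shows "R_of (Clop X) (Clop Y) (S_of X Y R) = map_prod (clopen_nbhds X) (clopen_nbhds Y) ` R"
proof (rule eq_map_prod_imageI)
  show "R_of (Clop X) (Clop Y) (S_of X Y R)
      \<subseteq> clopen_nbhds X ` topspace X \<times> clopen_nbhds Y ` topspace Y"
    using X Y by (auto simp: R_of_def ults_Clop_eq_image Stone_space_def)
  show "R \<subseteq> topspace X \<times> topspace Y"
    using closedin_subset[OF R] by simp
  show "(clopen_nbhds X x, clopen_nbhds Y y) \<in> R_of (Clop X) (Clop Y) (S_of X Y R) \<longleftrightarrow> (x, y) \<in> R"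
    if "x \<in> topspace X" "y \<in> topspace Y" for x y
    using S_of_Image_clopen_nbhds_subset_iff[OF X Y R that]
      ultrafilter_clopen_nbhds[OF that(1)] ultrafilter_clopen_nbhds[OF that(2)]
    by (simp add: R_of_def ults_def)
qed

theorem eta_iso_eq:
  assumes "S5_space X E"
  shows "eta_iso X E = map_prod id (clopen_nbhds X) ` E"
proof (rule eq_map_prod_imageI)
  have X: "Stone_space X" and E: "closedin (prod_topology X X) E"
    using assms by (auto simp: S5_space_def)
  show "eta_iso X E \<subseteq> id ` topspace X \<times> clopen_nbhds X ` topspace X"
    using X by (auto simp: eta_iso_def ults_Clop_eq_image Stone_space_def)
  show "E \<subseteq> topspace X \<times> topspace X"
    using closedin_subset[OF E] by simp
  show "(id x, clopen_nbhds X y) \<in> eta_iso X E \<longleftrightarrow> (x, y) \<in> E"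
    if "x \<in> topspace X" "y \<in> topspace X" for x y
    using S_of_Image_clopen_nbhds_subset_iff[OF X X E that] ultrafilter_clopen_nbhds[OF that(2)]
      that(1)
    by (simp add: eta_iso_def ults_def clopen_nbhds_def)
qed

section \<open>From subordination spaces to subordination algebras\<close>

lemma S5_spaceD:
  assumes "S5_space X E"
  shows "Stone_space X" "closedin (prod_topology X X) E" "E \<subseteq> topspace X \<times> topspace X"
    "x \<in> topspace X \<Longrightarrow> (x, x) \<in> E" "(x, y) \<in> E \<Longrightarrow> (y, x) \<in> E" "E O E = E"
proof -
  have eq: "equiv (topspace X) E"
    using assms by (simp add: S5_space_def)
  show "Stone_space X" "closedin (prod_topology X X) E" "E \<subseteq> topspace X \<times> topspace X"
    using assms by (simp_all add: S5_space_def)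
  show "x \<in> topspace X \<Longrightarrow> (x, x) \<in> E" "(x, y) \<in> E \<Longrightarrow> (y, x) \<in> E"
    using eq by (auto simp: equiv_def dest: refl_onD symD)
  show "E O E = E"
    using equiv_comp_eq[OF eq] eq by (simp add: equiv_def sym_conv_converse_eq)
qed

lemma stone_morD:
  assumes "stone_mor X E X' E' R"
  shows "R \<subseteq> topspace X \<times> topspace X'" "closedin (prod_topology X X') R" "E O R = R" "R O E' = R"
  using assms unfolding stone_mor_def by auto

lemma subordination_S_of:
  assumes "R \<subseteq> topspace X \<times> topspace Y"
  shows "subordination (Clop X) (Clop Y) (S_of X Y R)"
  unfolding subordination_def Clop_simps ble_Clop
proof (intro conjI allI impI)
  show "S_of X Y R \<subseteq> clopens X \<times> clopens Y"
    by (auto simp: S_of_def)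
  show "({}, {}) \<in> S_of X Y R" "(topspace X, topspace Y) \<in> S_of X Y R"
    using assms by (auto simp: S_of_def clopens_empty clopens_topspace)
next
  fix a b c assume "(a, c) \<in> S_of X Y R \<and> (b, c) \<in> S_of X Y R"
  then show "(a \<union> b, c) \<in> S_of X Y R"
    unfolding S_of_def using clopens_Un by blast
next
  fix a c d assume "(a, c) \<in> S_of X Y R \<and> (a, d) \<in> S_of X Y R"
  then show "(a, c \<inter> d) \<in> S_of X Y R"
    unfolding S_of_def using clopens_Int by blast
next
  fix a b c d assume "a \<in> clopens X \<and> d \<in> clopens Y \<and> a \<subseteq> b \<and> (b, c) \<in> S_of X Y R \<and> c \<subseteq> d"
  then show "(a, d) \<in> S_of X Y R"
    unfolding S_of_def by blast
qed

theorem S5_subalg_Clop: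
  assumes XE: "S5_space X E"
  shows "S5_subalg (Clop X) (S_of X X E)"
  unfolding S5_subalg_def S5_subordination_def
proof (intro conjI allI impI)
  show "is_balg (Clop X)" "subordination (Clop X) (Clop X) (S_of X X E)"
    using is_balg_Clop subordination_S_of[OF S5_spaceD(3)[OF XE]] by blast+
next
  note E = S5_spaceD[OF XE]
  fix U V assume "(U, V) \<in> S_of X X E"
  then have UV: "U \<in> clopens X" "V \<in> clopens X" "E `` U \<subseteq> V"
    by (auto simp: S_of_def)
  have "U \<subseteq> E `` U"
    using clopens_subset_topspace[OF UV(1)] E(4) by blast
  then show "ble (Clop X) U V"
    using UV(3) by simp
  have "y \<in> topspace X - U" if "(x, y) \<in> E" "x \<in> topspace X - V" for x y
    using that UV(3) E(3) E(5)[OF that(1)] by blast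
  then show "(bneg (Clop X) V, bneg (Clop X) U) \<in> S_of X X E"
    using UV clopens_Diff by (auto simp: S_of_def)
  have "S_of X X E O S_of X X E = S_of X X E"
    using S_of_relcomp[of X X X E E] E(1,2,6) by (simp add: Stone_space_def)
  then show "\<exists>W. (U, W) \<in> S_of X X E \<and> (W, V) \<in> S_of X X E"
    using \<open>(U, V) \<in> S_of X X E\<close> by blast
qed

theorem sub_mor_S_of:
  assumes "S5_space X E" "S5_space X' E'" and R: "stone_mor X E X' E' R"
  shows "sub_mor (Clop X) (S_of X X E) (Clop X') (S_of X' X' E') (S_of X X' R)"
proof -
  have X: "Stone_space X" "closedin (prod_topology X X) E"
    and X': "Stone_space X'" "closedin (prod_topology X' X') E'"
    using assms(1,2) by (auto simp: S5_space_def)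
  show ?thesis
    unfolding sub_mor_def
    using S_of_relcomp[of X X X' E R] S_of_relcomp[of X X' X' R E'] X X' stone_morD[OF R]
      subordination_S_of
    by (simp add: Stone_space_def)
qed

lemma exists_clopen_split_Int_Image:
  assumes X: "Stone_space X" and Y: "Stone_space Y"
    and R1: "closedin (prod_topology X Y) R1" and R2: "closedin (prod_topology X Y) R2"
    and x: "x \<in> topspace X" and V: "V \<in> clopens Y" and sub: "(R1 \<inter> R2) `` {x} \<subseteq> V"
  obtains N V1 V2 where "N \<in> clopens X" "x \<in> N" "(N, V1) \<in> S_of X Y R1" "(N, V2) \<in> S_of X Y R2"
    "V1 \<inter> V2 = V"
proof -
  have cX: "compact_space X" "Hausdorff_space X" "zero_dim X"
    and cY: "compact_space Y" "Hausdorff_space Y" "zero_dim Y"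
    using X Y by (auto simp: Stone_space_def)
  have x1: "closedin X {x}"
    using x cX(2) by (auto intro: closedin_t1_singleton Hausdorff_imp_t1_space)
  define L where "L = R2 `` {x} - V"
  have "closedin Y L"
    unfolding L_def using closedin_Image[OF cX(1) cY(1,2) R2 x1] V
    by (intro closedin_diff) (auto simp: clopens_def)
  then have "openin Y (topspace Y - L)"
    by (simp add: closedin_def)
  moreover have "R1 `` {x} \<subseteq> topspace Y - L"
    using sub closedin_subset[OF R1] by (auto simp: L_def)
  ultimately obtain C where C: "C \<in> clopens Y" "R1 `` {x} \<subseteq> C" "C \<subseteq> topspace Y - L"
    using exists_clopen_between[OF cY(1,3) closedin_Image[OF cX(1) cY(1,2) R1 x1]] by blast
  define V1 where "V1 = C \<union> V"
  define V2 where "V2 = (topspace Y - C) \<union> V"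
  have V12: "V1 \<in> clopens Y" "V2 \<in> clopens Y"
    unfolding V1_def V2_def using C(1) V by (auto intro: clopens_Un clopens_Diff)
  have "R1 `` {x} \<subseteq> V1" "R2 `` {x} \<subseteq> V2"
    using C closedin_subset[OF R2] by (auto simp: V1_def V2_def L_def)
  then obtain W1 W2 where W: "W1 \<in> clopens X" "x \<in> W1" "R1 `` W1 \<subseteq> V1"
    "W2 \<in> clopens X" "x \<in> W2" "R2 `` W2 \<subseteq> V2"
    using exists_clopen_Image_subset[OF cX cY(1) R1 x1, of V1]
      exists_clopen_Image_subset[OF cX cY(1) R2 x1, of V2] V12
    by (auto simp: clopens_def)
  show ?thesis
  proof
    show "W1 \<inter> W2 \<in> clopens X" "x \<in> W1 \<inter> W2"
      using W by (auto intro: clopens_Int)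
    show "(W1 \<inter> W2, V1) \<in> S_of X Y R1" "(W1 \<inter> W2, V2) \<in> S_of X Y R2"
      using W V12 by (auto simp: S_of_def intro: clopens_Int)
    show "V1 \<inter> V2 = V"
      using V clopens_subset_topspace[OF V] by (auto simp: V1_def V2_def)
  qed
qed

lemma subordination_Clop_Union:
  assumes T: "subordination (Clop X) (Clop Y) T" and V: "V \<in> clopens Y"
    and "finite \<F>" "\<And>N. N \<in> \<F> \<Longrightarrow> (N, V) \<in> T"
  shows "(\<Union>\<F>, V) \<in> T"
  using assms(3,4)
proof (induction rule: finite_induct)
  case empty
  have "({}, {}) \<in> T"
    using T by (simp add: subordination_def)
  then show ?case
    using T V clopens_empty[of X] unfolding subordination_def by fastforce
next
  case (insert N \<F>)
  then have "(N \<union> \<Union>\<F>, V) \<in> T"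
    using T unfolding subordination_def by simp
  then show ?case
    by simp
qed

text \<open>Compactness of \<open>U\<close> reduces the claim to finitely many clopen pieces, on each of which
  \<open>V\<close> splits as \<open>V1 \<inter> V2\<close> with the pieces \<open>S_of R1\<close>- and \<open>S_of R2\<close>-below \<open>V1\<close> and \<open>V2\<close>.\<close>

lemma S_of_Int_subset:
  assumes X: "Stone_space X" and Y: "Stone_space Y"
    and R1: "closedin (prod_topology X Y) R1" and R2: "closedin (prod_topology X Y) R2"
    and T: "subordination (Clop X) (Clop Y) T"
    and T1: "S_of X Y R1 \<subseteq> T" and T2: "S_of X Y R2 \<subseteq> T"
  shows "S_of X Y (R1 \<inter> R2) \<subseteq> T"
proof clarify
  fix U V assume "(U, V) \<in> S_of X Y (R1 \<inter> R2)"
  then have U: "U \<in> clopens X" and V: "V \<in> clopens Y" and sub: "(R1 \<inter> R2) `` U \<subseteq> V"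
    by (auto simp: S_of_def)
  let ?\<A> = "{N \<in> clopens X. (N, V) \<in> T}"
  have "U \<subseteq> \<Union>?\<A>"
  proof
    fix x assume "x \<in> U"
    moreover from this have "(R1 \<inter> R2) `` {x} \<subseteq> V"
      using sub by blast
    ultimately obtain N V1 V2 where "N \<in> clopens X" "x \<in> N" "(N, V1) \<in> T" "(N, V2) \<in> T"
      "V1 \<inter> V2 = V"
      using exists_clopen_split_Int_Image[OF X Y R1 R2 _ V] clopens_subset_topspace[OF U] T1 T2
      by (metis subsetD)
    moreover from this have "(N, V) \<in> T"
      using T unfolding subordination_def Clop_simps by metis
    ultimately show "x \<in> \<Union>?\<A>"
      by blast
  qed
  moreover have "compactin X U"
    using U X closedin_compact_space by (auto simp: clopens_def Stone_space_def)
  ultimately obtain \<F> where \<F>: "finite \<F>" "\<F> \<subseteq> ?\<A>" "U \<subseteq> \<Union>\<F>"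
    using compactinD[of X U ?\<A>] by (auto simp: clopens_def)
  have "(\<Union>\<F>, V) \<in> T"
    using subordination_Clop_Union[OF T V \<F>(1)] \<F>(2) by blast
  moreover have "\<Union>\<F> \<in> clopens X"
    using \<F>(1,2) by (intro clopens_Union) auto
  ultimately show "(U, V) \<in> T"
    using T U V \<F>(3) unfolding subordination_def Clop_simps ble_Clop by blast
qed

lemma stone_mor_Int:
  assumes "S5_space X E" "S5_space X' E'" "stone_mor X E X' E' R1" "stone_mor X E X' E' R2"
  shows "stone_mor X E X' E' (R1 \<inter> R2)"
proof -
  note R1 = stone_morD[OF assms(3)] and R2 = stone_morD[OF assms(4)]
  have "E O (R1 \<inter> R2) = R1 \<inter> R2"
    using R1(1,3) R2(3) S5_spaceD(4)[OF assms(1)] by blast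
  moreover have "(R1 \<inter> R2) O E' = R1 \<inter> R2"
    using R1(1,4) R2(4) S5_spaceD(4)[OF assms(2)] by blast
  ultimately show ?thesis
    using R1(1,2) R2(2) by (auto simp: stone_mor_def intro: closedin_Int)
qed

theorem sub_is_meet_S_of:
  assumes XE: "S5_space X E" and XE': "S5_space X' E'"
    and R1: "stone_mor X E X' E' R1" and R2: "stone_mor X E X' E' R2"
  shows "sub_is_meet (Clop X) (S_of X X E) (Clop X') (S_of X' X' E')
           (S_of X X' R1) (S_of X X' R2) (S_of X X' (R1 \<inter> R2))"
  unfolding sub_is_meet_def
proof (intro conjI allI impI)
  show "sub_mor (Clop X) (S_of X X E) (Clop X') (S_of X' X' E') (S_of X X' (R1 \<inter> R2))"
    using sub_mor_S_of[OF XE XE' stone_mor_Int[OF assms]] .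
  show "S_of X X' R1 \<subseteq> S_of X X' (R1 \<inter> R2)" "S_of X X' R2 \<subseteq> S_of X X' (R1 \<inter> R2)"
    by (auto simp: S_of_def)
next
  fix T assume "sub_mor (Clop X) (S_of X X E) (Clop X') (S_of X' X' E') T \<and>
    S_of X X' R1 \<subseteq> T \<and> S_of X X' R2 \<subseteq> T"
  then show "S_of X X' (R1 \<inter> R2) \<subseteq> T"
    using S_of_Int_subset[OF S5_spaceD(1)[OF XE] S5_spaceD(1)[OF XE']
        stone_morD(2)[OF R1] stone_morD(2)[OF R2]]
    by (simp add: sub_mor_def)
qed

theorem S_of_converse:
  assumes R: "R \<subseteq> topspace X \<times> topspace X'"
  shows "S_of X' X (R\<inverse>) = sub_dagger (Clop X) (Clop X') (S_of X X' R)"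
proof -
  have "R\<inverse> `` V \<subseteq> U \<longleftrightarrow> R `` (topspace X - U) \<subseteq> topspace X' - V" for U V
    using R by blast
  then show ?thesis
    by (auto simp: S_of_def sub_dagger_def clopens_Diff)
qed

section \<open>From subordination algebras to subordination spaces\<close>

locale balg_subordination = A: bool_alg A + B: bool_alg B
  for A :: "'b balg" and B :: "'d balg" +
  fixes T
  assumes subordination: "subordination A B T"
begin

lemmas T = subordinationD[OF subordination]

lemma bfilter_Image_ultrafilter:
  assumes x: "ultrafilter A x"
  shows "B.bfilter (T `` x)"
proof -
  note xF = A.bfilterD[OF A.ultrafilterD(1)[OF x]]
  show ?thesis
    unfolding B.bfilter_def
  proof (intro conjI ballI impI)
    show "T `` x \<subseteq> bcarrier B" "bone B \<in> T `` x"
      using T(1,3) xF(2) by blast+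
  next
    fix c d assume "c \<in> T `` x" "d \<in> T `` x"
    then obtain a b where ab: "(a, c) \<in> T" "(b, d) \<in> T" "a \<in> x" "b \<in> x"
      by blast
    then have car: "a \<in> bcarrier A" "b \<in> bcarrier A" "c \<in> bcarrier B" "d \<in> bcarrier B"
      using T(1) by auto
    have "(bmeet A a b, c) \<in> T" "(bmeet A a b, d) \<in> T"
      using T(6)[OF _ car(3) _ ab(1) B.leq_refl[OF car(3)]]
        T(6)[OF _ car(4) _ ab(2) B.leq_refl[OF car(4)]] car A.meet_leq1 A.meet_leq2 by simp_all
    then show "bmeet B c d \<in> T `` x"
      using T(5) xF(3)[OF ab(3,4)] by blast
  next
    fix c d assume "c \<in> T `` x" "d \<in> bcarrier B" "ble B c d"
    then show "d \<in> T `` x"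
      using T(1,6) A.leq_refl by blast
  qed
qed

lemma bideal_below:
  assumes b: "b \<in> bcarrier B"
  shows "A.bideal {a \<in> bcarrier A. (a, b) \<in> T}"
  unfolding A.bideal_def
  using T(4,6) T(6)[OF A.zero_closed b A.leq_refl[OF A.zero_closed] T(2) B.zero_leq[OF b]]
    b B.leq_refl[OF b]
  by auto

lemma bideal_avoiding:
  assumes z: "ultrafilter B z"
  shows "A.bideal {a \<in> bcarrier A. \<exists>c\<in>bcarrier B. c \<notin> z \<and> (a, c) \<in> T}"
  unfolding A.bideal_def
proof (intro conjI ballI impI)
  show "bzero A \<in> {a \<in> bcarrier A. \<exists>c\<in>bcarrier B. c \<notin> z \<and> (a, c) \<in> T}"
    using T(2) B.ultrafilterD(2)[OF z] by auto
next
  fix a b assume "a \<in> {a \<in> bcarrier A. \<exists>c\<in>bcarrier B. c \<notin> z \<and> (a, c) \<in> T}"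
    "b \<in> {a \<in> bcarrier A. \<exists>c\<in>bcarrier B. c \<notin> z \<and> (a, c) \<in> T}"
  then obtain c d where cd: "a \<in> bcarrier A" "b \<in> bcarrier A" "c \<in> bcarrier B" "d \<in> bcarrier B"
    "c \<notin> z" "d \<notin> z" "(a, c) \<in> T" "(b, d) \<in> T"
    by blast
  have "(a, bjoin B c d) \<in> T" "(b, bjoin B c d) \<in> T"
    using T(6)[OF cd(1) _ A.leq_refl[OF cd(1)] cd(7)] T(6)[OF cd(2) _ A.leq_refl[OF cd(2)] cd(8)]
      cd(3,4) B.join_upper1 B.join_upper2 by simp_all
  moreover have "bjoin B c d \<notin> z"
    using B.ultrafilter_join_iff[OF z cd(3,4)] cd(5,6) by simp
  ultimately show "bjoin A a b \<in> {a \<in> bcarrier A. \<exists>c\<in>bcarrier B. c \<notin> z \<and> (a, c) \<in> T}"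
    using T(4) cd(1-4) by fastforce
next
  fix a b assume "a \<in> {a \<in> bcarrier A. \<exists>c\<in>bcarrier B. c \<notin> z \<and> (a, c) \<in> T}"
    "b \<in> bcarrier A" "ble A b a"
  then show "b \<in> {a \<in> bcarrier A. \<exists>c\<in>bcarrier B. c \<notin> z \<and> (a, c) \<in> T}"
    using T(6) B.leq_refl by blast
qed auto

text \<open>If \<open>(a, b) \<notin> T\<close>, an ultrafilter \<open>x \<ni> a\<close> avoiding \<open>{c. (c, b) \<in> T}\<close> has \<open>b \<notin> T `` x\<close>,
  and an ultrafilter \<open>y \<supseteq> T `` x\<close> avoiding the elements below \<open>b\<close> is \<open>R_of\<close>-related to \<open>x\<close>
  but lies outside \<open>stone_map B b\<close>.\<close>

lemma Image_R_of_stone_map_subset_iff: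
  assumes a: "a \<in> bcarrier A" and b: "b \<in> bcarrier B"
  shows "R_of A B T `` stone_map A a \<subseteq> stone_map B b \<longleftrightarrow> (a, b) \<in> T"
proof
  assume "(a, b) \<in> T"
  then show "R_of A B T `` stone_map A a \<subseteq> stone_map B b"
    by (auto simp: R_of_def A.mem_stone_map B.mem_stone_map ults_def; blast)
next
  assume sub: "R_of A B T `` stone_map A a \<subseteq> stone_map B b"
  show "(a, b) \<in> T"
  proof (rule ccontr)
    assume "(a, b) \<notin> T"
    then have "{c \<in> bcarrier A. ble A a c} \<inter> {c \<in> bcarrier A. (c, b) \<in> T} = {}"
      using T(6)[OF a b _ _ B.leq_refl[OF b]] by blast
    then obtain x where x: "ultrafilter A x" "{c \<in> bcarrier A. ble A a c} \<subseteq> x"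
      "x \<inter> {c \<in> bcarrier A. (c, b) \<in> T} = {}"
      by (rule A.ultrafilter_exists[OF A.bfilter_principal[OF a] bideal_below[OF b]])
    have "b \<notin> T `` x"
      using x(3) T(1) A.bfilterD(1)[OF A.ultrafilterD(1)[OF x(1)]] by blast
    then have "T `` x \<inter> {c \<in> bcarrier B. ble B c b} = {}"
      using B.bfilterD(4)[OF bfilter_Image_ultrafilter[OF x(1)]] b by blast
    then obtain y where y: "ultrafilter B y" "T `` x \<subseteq> y" "y \<inter> {c \<in> bcarrier B. ble B c b} = {}"
      by (rule B.ultrafilter_exists[OF bfilter_Image_ultrafilter[OF x(1)] B.bideal_principal[OF b]])
    have "x \<in> stone_map A a"
      using x(1,2) a A.leq_refl[OF a] by (auto simp: A.mem_stone_map)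
    then have "y \<in> stone_map B b"
      using sub x(1) y(1,2) by (auto simp: R_of_def ults_def)
    then show False
      using y(3) b B.leq_refl[OF b] by (auto simp: B.mem_stone_map)
  qed
qed

theorem S_of_R_of:
  "S_of (Ult A) (Ult B) (R_of A B T) = map_prod (stone_map A) (stone_map B) ` T"
proof (rule eq_map_prod_imageI)
  show "S_of (Ult A) (Ult B) (R_of A B T) \<subseteq> stone_map A ` bcarrier A \<times> stone_map B ` bcarrier B"
    using A.bij_betw_stone_map B.bij_betw_stone_map by (auto simp: S_of_def bij_betw_def)
  show "T \<subseteq> bcarrier A \<times> bcarrier B"
    by (rule T(1))
  show "(stone_map A a, stone_map B b) \<in> S_of (Ult A) (Ult B) (R_of A B T) \<longleftrightarrow> (a, b) \<in> T"
    if "a \<in> bcarrier A" "b \<in> bcarrier B" for a b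
    using Image_R_of_stone_map_subset_iff[OF that] that A.stone_map_in_clopens B.stone_map_in_clopens
    by (simp add: S_of_def)
qed

end

lemma closedin_prod_Collect_implies:
  assumes "\<And>a b. (a, b) \<in> T \<Longrightarrow> openin X (P a)" "\<And>a b. (a, b) \<in> T \<Longrightarrow> closedin Y (Q b)"
  shows "closedin (prod_topology X Y)
           {(p, q). p \<in> topspace X \<and> q \<in> topspace Y \<and> (\<forall>(a, b)\<in>T. p \<in> P a \<longrightarrow> q \<in> Q b)}"
proof -
  have eq: "{(p, q). p \<in> topspace X \<and> q \<in> topspace Y \<and> (\<forall>(a, b)\<in>T. p \<in> P a \<longrightarrow> q \<in> Q b)} =
      topspace (prod_topology X Y) - (\<Union>(a, b)\<in>T. P a \<times> (topspace Y - Q b))"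
    by auto
  have "openin (prod_topology X Y) (\<Union>(a, b)\<in>T. P a \<times> (topspace Y - Q b))"
    using assms by (auto intro!: openin_Union simp: openin_prod_Times_iff closedin_def)
  then show ?thesis
    unfolding eq by (rule closedin_diff[OF closedin_topspace])
qed

context balg_subordination
begin

lemma R_of_subset: "R_of A B T \<subseteq> topspace (Ult A) \<times> topspace (Ult B)"
  by (auto simp: R_of_def A.topspace_Ult B.topspace_Ult)

lemma closedin_R_of: "closedin (prod_topology (Ult A) (Ult B)) (R_of A B T)"
proof -
  have "R_of A B T = {(p, q). p \<in> topspace (Ult A) \<and> q \<in> topspace (Ult B) \<and>
      (\<forall>(a, b)\<in>T. p \<in> stone_map A a \<longrightarrow> q \<in> stone_map B b)}"
    by (auto simp: R_of_def A.topspace_Ult B.topspace_Ult A.mem_stone_map B.mem_stone_map ults_def)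
  then show ?thesis
    using T(1) A.openin_Ult_stone_map B.closedin_Ult_stone_map
    by (auto intro!: closedin_prod_Collect_implies)
qed

end

lemma balg_subordination_sub_mor:
  assumes "S5_subalg B S" "S5_subalg B' S'" "sub_mor B S B' S' T"
  shows "balg_subordination B B' T"
  using assms
  by (auto simp: balg_subordination_def balg_subordination_axioms_def bool_alg_def S5_subalg_def
      sub_mor_def)

theorem R_of_relcomp:
  assumes T: "balg_subordination A B T" and T': "balg_subordination B C T'"
  shows "R_of A C (T O T') = R_of A B T O R_of B C T'"
proof
  show "R_of A B T O R_of B C T' \<subseteq> R_of A C (T O T')"
    unfolding R_of_def by blast
next
  interpret T: balg_subordination A B T by fact
  interpret T': balg_subordination B C T' by fact
  show "R_of A C (T O T') \<subseteq> R_of A B T O R_of B C T'"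
  proof clarify
    fix x z assume "(x, z) \<in> R_of A C (T O T')"
    then have x: "ultrafilter A x" and z: "ultrafilter C z" and sub: "T' `` (T `` x) \<subseteq> z"
      by (auto simp: R_of_def ults_def)
    let ?I = "{b \<in> bcarrier B. \<exists>c\<in>bcarrier C. c \<notin> z \<and> (b, c) \<in> T'}"
    have "T `` x \<inter> ?I = {}"
      using sub by blast
    then obtain y where y: "ultrafilter B y" "T `` x \<subseteq> y" "y \<inter> ?I = {}"
      by (rule T.B.ultrafilter_exists[OF T.bfilter_Image_ultrafilter[OF x] T'.bideal_avoiding[OF z]])
    then have "T' `` y \<subseteq> z"
      using T'.T(1) by blast
    then show "(x, z) \<in> R_of A B T O R_of B C T'"
      using x y z by (auto simp: R_of_def ults_def)
  qed
qed

locale S5_algebra =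
  fixes B :: "'b balg" and S
  assumes S5_subalg: "S5_subalg B S"

sublocale S5_algebra \<subseteq> balg_subordination B B S
  using S5_subalg by (simp add: S5_subalg_def S5_subordination_def balg_subordination_def
      balg_subordination_axioms_def bool_alg_def)

context S5_algebra
begin

lemma S_leq: "(a, b) \<in> S \<Longrightarrow> ble B a b"
  and S_neg: "(a, b) \<in> S \<Longrightarrow> (bneg B b, bneg B a) \<in> S"
  and S_interpolate: "(a, b) \<in> S \<Longrightarrow> \<exists>c. (a, c) \<in> S \<and> (c, b) \<in> S"
  using S5_subalg by (auto simp: S5_subalg_def S5_subordination_def)

lemma S_relcomp_S: "S O S = S"
proof
  show "S O S \<subseteq> S"
  proof clarify
    fix a b c assume ab: "(a, b) \<in> S" and bc: "(b, c) \<in> S"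
    then have "a \<in> bcarrier B" "c \<in> bcarrier B"
      using T(1) by auto
    then show "(a, c) \<in> S"
      using T(6)[OF _ _ S_leq[OF ab] bc A.leq_refl] by blast
  qed
  show "S \<subseteq> S O S"
    using S_interpolate by (auto intro: relcompI)
qed

lemma R_of_equiv: "equiv (ults B) (R_of B B S)"
proof (rule equivI)
  show "R_of B B S \<subseteq> ults B \<times> ults B"
    by (auto simp: R_of_def)
  show "refl_on (ults B) (R_of B B S)"
  proof (rule refl_onI)
    fix x assume "x \<in> ults B"
    then show "(x, x) \<in> R_of B B S"
      using T(1) S_leq A.bfilterD(4)[OF A.ultrafilterD(1)] by (auto simp: R_of_def ults_def)
  qed
  show "sym (R_of B B S)"
  proof (rule symI)
    fix x y assume "(x, y) \<in> R_of B B S"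
    then have x: "ultrafilter B x" and y: "ultrafilter B y" and sub: "S `` x \<subseteq> y"
      by (auto simp: R_of_def ults_def)
    have "c \<in> x" if "(b, c) \<in> S" "b \<in> y" for b c
    proof (rule ccontr)
      have bc: "b \<in> bcarrier B" "c \<in> bcarrier B"
        using that(1) T(1) by auto
      assume "c \<notin> x"
      then have "bneg B b \<in> y"
        using sub S_neg[OF that(1)] A.ultrafilter_neg_iff[OF x bc(2)] by blast
      then show False
        using that(2) A.ultrafilter_neg_iff[OF y bc(1)] by simp
    qed
    then show "(y, x) \<in> R_of B B S"
      using x y by (auto simp: R_of_def ults_def)
  qed
  show "trans (R_of B B S)"
  proof (rule transI)
    fix x y z assume "(x, y) \<in> R_of B B S" "(y, z) \<in> R_of B B S"
    then have xz: "x \<in> ults B" "z \<in> ults B" and "S `` x \<subseteq> y" "S `` y \<subseteq> z"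
      by (auto simp: R_of_def)
    have "S `` x = S `` (S `` x)"
      using S_relcomp_S by (metis relcomp_Image)
    also have "\<dots> \<subseteq> S `` y"
      using \<open>S `` x \<subseteq> y\<close> by (rule Image_mono[OF order_refl])
    finally show "(x, z) \<in> R_of B B S"
      using xz \<open>S `` y \<subseteq> z\<close> by (simp add: R_of_def)
  qed
qed

theorem S5_space_Ult: "S5_space (Ult B) (R_of B B S)"
  using A.Stone_space_Ult R_of_equiv closedin_R_of R_of_subset
  by (simp add: S5_space_def A.topspace_Ult)

end

theorem stone_mor_R_of:
  assumes "S5_algebra B S" "S5_algebra B' S'" and T: "sub_mor B S B' S' T"
  shows "stone_mor (Ult B) (R_of B B S) (Ult B') (R_of B' B' S') (R_of B B' T)"
proof -
  interpret S: S5_algebra B S by fact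
  interpret S': S5_algebra B' S' by fact
  interpret T: balg_subordination B B' T
    by (rule balg_subordination_sub_mor[OF S.S5_subalg S'.S5_subalg T])
  have "R_of B B S O R_of B B' T = R_of B B' T" "R_of B B' T O R_of B' B' S' = R_of B B' T"
    using R_of_relcomp[of B B S B' T] R_of_relcomp[of B B' T B' S'] T
    by (simp_all add: sub_mor_def S.balg_subordination_axioms S'.balg_subordination_axioms T.balg_subordination_axioms)
  then show ?thesis
    using T.R_of_subset T.closedin_R_of by (simp add: stone_mor_def)
qed

section \<open>The natural isomorphisms\<close>

lemma homeomorphic_map_map_prod:
  assumes "homeomorphic_map X X' f" "homeomorphic_map Y Y' g"
  shows "homeomorphic_map (prod_topology X Y) (prod_topology X' Y') (map_prod f g)"
proof -
  obtain f' g' where "homeomorphic_maps X X' f f'" "homeomorphic_maps Y Y' g g'"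
    using assms by (auto simp: homeomorphic_map_maps)
  then have "homeomorphic_maps (prod_topology X Y) (prod_topology X' Y')
      (\<lambda>(x, y). (f x, g y)) (\<lambda>(x, y). (f' x, g' y))"
    by (simp add: homeomorphic_maps_prod)
  then show ?thesis
    by (auto simp: homeomorphic_map_maps map_prod_def)
qed

lemma closedin_map_prod_image:
  assumes "homeomorphic_map X X' f" "homeomorphic_map Y Y' g"
    and "closedin (prod_topology X Y) R"
  shows "closedin (prod_topology X' Y') (map_prod f g ` R)"
  using homeomorphic_map_closedness_eq[OF homeomorphic_map_map_prod[OF assms(1,2)]] assms(3)
  by blast

theorem stone_iso_eta_iso:
  assumes XE: "S5_space X E"
  shows "stone_iso X E (Ult (Clop X)) (R_of (Clop X) (Clop X) (S_of X X E)) (eta_iso X E)"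
proof -
  note E = S5_spaceD[OF XE]
  let ?p = "clopen_nbhds X"
  have \<eta>: "eta_iso X E = map_prod id ?p ` E"
    by (rule eta_iso_eq[OF XE])
  have \<rho>: "R_of (Clop X) (Clop X) (S_of X X E) = map_prod ?p ?p ` E"
    by (rule R_of_S_of[OF E(1) E(1) E(2)])
  have \<eta>_converse: "(map_prod id ?p ` E)\<inverse> = map_prod ?p id ` E"
    using E(5) by auto
  have hom: "homeomorphic_map X (Ult (Clop X)) ?p"
    by (rule homeomorphic_map_clopen_nbhds[OF E(1)])
  have "inj_on ?p (topspace X)"
    using bij_betw_clopen_nbhds[OF E(1)] by (rule bij_betw_imp_inj_on)
  note relcomp = relcomp_map_prod_image[OF this] relcomp_map_prod_image[OF inj_on_id]
  have dom: "Domain E \<subseteq> topspace X" "Range E \<subseteq> topspace X"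
    using E(3) by auto
  have E_id: "E = map_prod id id ` E"
    by (simp add: id_def)
  note comp = relcomp(1)[OF dom(2,1)] relcomp(2)[OF subset_UNIV subset_UNIV]
  have closed: "closedin (prod_topology X (Ult (Clop X))) (eta_iso X E)"
    unfolding \<eta> by (rule closedin_map_prod_image[OF _ hom E(2)]) simp
  show ?thesis
    unfolding stone_iso_def stone_mor_def
  proof (intro conjI exI[of _ "(eta_iso X E)\<inverse>"])
    show "eta_iso X E \<subseteq> topspace X \<times> topspace (Ult (Clop X))"
      "(eta_iso X E)\<inverse> \<subseteq> topspace (Ult (Clop X)) \<times> topspace X"
      using closedin_subset[OF closed] by auto
    show "closedin (prod_topology X (Ult (Clop X))) (eta_iso X E)"
      "closedin (prod_topology (Ult (Clop X)) X) ((eta_iso X E)\<inverse>)"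
      using closed by (simp_all add: closedin_converse)
    show "E O eta_iso X E = eta_iso X E"
      by (subst (1) E_id) (simp add: \<eta> comp E(6))
    show "eta_iso X E O R_of (Clop X) (Clop X) (S_of X X E) = eta_iso X E"
      "R_of (Clop X) (Clop X) (S_of X X E) O (eta_iso X E)\<inverse> = (eta_iso X E)\<inverse>"
      "eta_iso X E O (eta_iso X E)\<inverse> = E"
      "(eta_iso X E)\<inverse> O eta_iso X E = R_of (Clop X) (Clop X) (S_of X X E)"
      by (simp_all add: \<eta> \<eta>_converse \<rho> comp E(6) E_id[symmetric])
    show "(eta_iso X E)\<inverse> O E = (eta_iso X E)\<inverse>"
      by (subst (2) E_id) (simp add: \<eta> \<eta>_converse comp E(6))
  qed
qed

theorem eta_iso_natural:
  assumes XE: "S5_space X E" and XE': "S5_space X' E'" and R: "stone_mor X E X' E' R"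
  shows "eta_iso X E O R_of (Clop X) (Clop X') (S_of X X' R) = R O eta_iso X' E'"
proof -
  note E = S5_spaceD[OF XE] and E' = S5_spaceD[OF XE'] and R = stone_morD[OF R]
  have "inj_on (clopen_nbhds X) (topspace X)"
    using bij_betw_clopen_nbhds[OF E(1)] by (rule bij_betw_imp_inj_on)
  moreover have "Range E \<subseteq> topspace X" "Domain R \<subseteq> topspace X"
    using E(3) R(1) by auto
  ultimately have "eta_iso X E O R_of (Clop X) (Clop X') (S_of X X' R) =
      map_prod id (clopen_nbhds X') ` (E O R)"
    using eta_iso_eq[OF XE] R_of_S_of[OF E(1) E'(1) R(2)] by (simp add: relcomp_map_prod_image)
  also have "\<dots> = map_prod id (clopen_nbhds X') ` (R O E')"
    using R(3,4) by simp
  also have "\<dots> = map_prod id id ` R O map_prod id (clopen_nbhds X') ` E'"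
    by (rule relcomp_map_prod_image[OF inj_on_id subset_UNIV subset_UNIV, symmetric])
  also have "\<dots> = R O eta_iso X' E'"
    using eta_iso_eq[OF XE'] by (simp add: id_def)
  finally show ?thesis .
qed

context S5_algebra
begin

lemma eps_iso_eq: "eps_iso B S = map_prod id (stone_map B) ` S"
proof (rule eq_map_prod_imageI)
  show "eps_iso B S \<subseteq> id ` bcarrier B \<times> stone_map B ` bcarrier B"
    using A.bij_betw_stone_map by (auto simp: eps_iso_def bij_betw_def)
  show "S \<subseteq> bcarrier B \<times> bcarrier B"
    by (rule T(1))
  show "(id a, stone_map B c) \<in> eps_iso B S \<longleftrightarrow> (a, c) \<in> S"
    if "a \<in> bcarrier B" "c \<in> bcarrier B" for a c
  proof
    assume "(id a, stone_map B c) \<in> eps_iso B S"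
    then obtain b where "(a, b) \<in> S" "stone_map B b \<subseteq> stone_map B c"
      by (auto simp: eps_iso_def)
    moreover from this have "ble B b c"
      using T(1) that(2) A.stone_map_subset_iff by blast
    ultimately show "(a, c) \<in> S"
      using T(6)[OF that(1,2) A.leq_refl[OF that(1)]] by blast
  next
    assume "(a, c) \<in> S"
    then show "(id a, stone_map B c) \<in> eps_iso B S"
      using that A.stone_map_in_clopens by (auto simp: eps_iso_def)
  qed
qed

theorem sub_iso_eps_iso:
  "sub_iso B S (Clop (Ult B)) (S_of (Ult B) (Ult B) (R_of B B S)) (eps_iso B S)"
proof -
  let ?\<phi> = "stone_map B"
  note relcomp = relcomp_map_prod_image[OF A.inj_on_stone_map] relcomp_map_prod_image[OF inj_on_id]
  have dom: "Domain S \<subseteq> bcarrier B" "Range S \<subseteq> bcarrier B"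
    using T(1) by auto
  note comp = relcomp(1)[OF dom(2,1)] relcomp(2)[OF subset_UNIV subset_UNIV]
  have S_id: "S = map_prod id id ` S"
    by (simp add: id_def)
  have sub: "subordination B (Clop (Ult B)) (map_prod id ?\<phi> ` S)"
    "subordination (Clop (Ult B)) B (map_prod ?\<phi> id ` S)"
    using subordination_map_prod_image[OF A.is_balg A.is_balg _ _ subordination]
      balg_iso_id A.balg_iso_stone_map
    by blast+
  show ?thesis
    unfolding sub_iso_def sub_mor_def eps_iso_eq S_of_R_of
  proof (intro conjI exI[of _ "map_prod ?\<phi> id ` S"] sub)
    show "S O map_prod id ?\<phi> ` S = map_prod id ?\<phi> ` S"
      by (subst (1) S_id) (simp add: comp S_relcomp_S)
    show "map_prod ?\<phi> id ` S O S = map_prod ?\<phi> id ` S"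
      by (subst (2) S_id) (simp add: comp S_relcomp_S)
  qed (simp_all add: comp S_relcomp_S S_id[symmetric])
qed

end

theorem eps_iso_natural:
  assumes "S5_algebra B S" "S5_algebra B' S'" and T: "sub_mor B S B' S' T"
  shows "eps_iso B S O S_of (Ult B) (Ult B') (R_of B B' T) = T O eps_iso B' S'"
proof -
  interpret S: S5_algebra B S by fact
  interpret S': S5_algebra B' S' by fact
  interpret T: balg_subordination B B' T
    by (rule balg_subordination_sub_mor[OF S.S5_subalg S'.S5_subalg T])
  have "Range S \<subseteq> bcarrier B" "Domain T \<subseteq> bcarrier B"
    using S.T(1) T.T(1) by auto
  then have "eps_iso B S O S_of (Ult B) (Ult B') (R_of B B' T) = map_prod id (stone_map B') ` (S O T)"
    using S.eps_iso_eq T.S_of_R_of by (simp add: relcomp_map_prod_image[OF S.A.inj_on_stone_map])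
  also have "\<dots> = map_prod id (stone_map B') ` (T O S')"
    using T by (simp add: sub_mor_def)
  also have "\<dots> = map_prod id id ` T O map_prod id (stone_map B') ` S'"
    by (rule relcomp_map_prod_image[OF inj_on_id subset_UNIV subset_UNIV, symmetric])
  also have "\<dots> = T O eps_iso B' S'"
    using S'.eps_iso_eq by (simp add: id_def)
  finally show ?thesis .
qed

theorem theorem3p8:
  shows
  \<comment> \<open>F is well defined on objects\<close>
  "(\<forall>(X::'a topology) E. S5_space X E \<longrightarrow> S5_subalg (Clop X) (S_of X X E))
   \<comment> \<open>F is well defined on morphisms\<close>
 \<and> (\<forall>(X::'a topology) E (X'::'c topology) E' R.
      S5_space X E \<and> S5_space X' E' \<and> stone_mor X E X' E' R
      \<longrightarrow> sub_mor (Clop X) (S_of X X E) (Clop X') (S_of X' X' E') (S_of X X' R))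
   \<comment> \<open>F preserves composition (identities are preserved by definition: F(E) = S_E)\<close>
 \<and> (\<forall>(X::'a topology) E (X'::'c topology) E' (X''::'e topology) E'' R R'.
      S5_space X E \<and> S5_space X' E' \<and> S5_space X'' E'' \<and>
      stone_mor X E X' E' R \<and> stone_mor X' E' X'' E'' R'
      \<longrightarrow> S_of X X'' (R O R') = S_of X X' R O S_of X' X'' R')
   \<comment> \<open>F preserves binary meets of morphisms\<close>
 \<and> (\<forall>(X::'a topology) E (X'::'c topology) E' R1 R2.
      S5_space X E \<and> S5_space X' E' \<and> stone_mor X E X' E' R1 \<and> stone_mor X E X' E' R2
      \<longrightarrow> sub_is_meet (Clop X) (S_of X X E) (Clop X') (S_of X' X' E')
            (S_of X X' R1) (S_of X X' R2) (S_of X X' (R1 \<inter> R2)))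
   \<comment> \<open>F commutes with daggers\<close>
 \<and> (\<forall>(X::'a topology) E (X'::'c topology) E' R.
      S5_space X E \<and> S5_space X' E' \<and> stone_mor X E X' E' R
      \<longrightarrow> S_of X' X (R\<inverse>) = sub_dagger (Clop X) (Clop X') (S_of X X' R))
   \<comment> \<open>G is well defined on objects\<close>
 \<and> (\<forall>(B::'b balg) S. S5_subalg B S \<longrightarrow> S5_space (Ult B) (R_of B B S))
   \<comment> \<open>G is well defined on morphisms\<close>
 \<and> (\<forall>(B::'b balg) S (B'::'d balg) S' T.
      S5_subalg B S \<and> S5_subalg B' S' \<and> sub_mor B S B' S' T
      \<longrightarrow> stone_mor (Ult B) (R_of B B S) (Ult B') (R_of B' B' S') (R_of B B' T))
   \<comment> \<open>G preserves composition\<close>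
 \<and> (\<forall>(B::'b balg) S (B'::'d balg) S' (B''::'f balg) S'' T T'.
      S5_subalg B S \<and> S5_subalg B' S' \<and> S5_subalg B'' S'' \<and>
      sub_mor B S B' S' T \<and> sub_mor B' S' B'' S'' T'
      \<longrightarrow> R_of B B'' (T O T') = R_of B B' T O R_of B' B'' T')
   \<comment> \<open>natural isomorphism Id \<cong> G F\<close>
 \<and> (\<forall>(X::'a topology) E. S5_space X E \<longrightarrow>
      stone_iso X E (Ult (Clop X)) (R_of (Clop X) (Clop X) (S_of X X E)) (eta_iso X E))
 \<and> (\<forall>(X::'a topology) E (X'::'c topology) E' R.
      S5_space X E \<and> S5_space X' E' \<and> stone_mor X E X' E' R
      \<longrightarrow> eta_iso X E O R_of (Clop X) (Clop X') (S_of X X' R) = R O eta_iso X' E')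
   \<comment> \<open>natural isomorphism Id \<cong> F G\<close>
 \<and> (\<forall>(B::'b balg) S. S5_subalg B S \<longrightarrow>
      sub_iso B S (Clop (Ult B)) (S_of (Ult B) (Ult B) (R_of B B S)) (eps_iso B S))
 \<and> (\<forall>(B::'b balg) S (B'::'d balg) S' T.
      S5_subalg B S \<and> S5_subalg B' S' \<and> sub_mor B S B' S' T
      \<longrightarrow> eps_iso B S O S_of (Ult B) (Ult B') (R_of B B' T) = T O eps_iso B' S')"
proof (intro conjI allI impI; (elim conjE)?)
  fix X :: "'a topology" and X' :: "'c topology" and X'' :: "'e topology" and E E' E'' R R'
  assume "S5_space X E" "S5_space X' E'" "S5_space X'' E''"
    "stone_mor X E X' E' R" "stone_mor X' E' X'' E'' R'"
  then show "S_of X X'' (R O R') = S_of X X' R O S_of X' X'' R'"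
    by (intro S_of_relcomp)
      (auto simp: S5_space_def Stone_space_def dest: stone_morD(2))
next
  fix B :: "'b balg" and B' :: "'d balg" and B'' :: "'f balg" and S S' S'' T T'
  assume S: "S5_subalg B S" "S5_subalg B' S'" "S5_subalg B'' S''"
    and T: "sub_mor B S B' S' T" "sub_mor B' S' B'' S'' T'"
  show "R_of B B'' (T O T') = R_of B B' T O R_of B' B'' T'"
    using R_of_relcomp[OF balg_subordination_sub_mor[OF S(1,2) T(1)]
        balg_subordination_sub_mor[OF S(2,3) T(2)]] .
qed (simp_all add: S5_subalg_Clop sub_mor_S_of sub_is_meet_S_of S_of_converse stone_morD(1)
    S5_algebra.intro S5_algebra.S5_space_Ult stone_mor_R_of stone_iso_eta_iso eta_iso_natural
    S5_algebra.sub_iso_eps_iso eps_iso_natural)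

end
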